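(* Let $K$ be a positive braid knot, i.e. a knot in $S^3$ which is the closure of a braid word in the standard generators $\sigma_1,\ldots,\sigma_{p-1}$ of the braid group on $p$ strands involving only positive powers of the generators. Then the first Khovanov homology group of $K$ vanishes: $\mathcal{H}^1(K)=0$ (in every quantum grading).
   Context: $\mathcal{H}^{i,j}(K)$ denotes Khovanov homology (with $\mathbb{Z}$ coefficients) of $K$, the categorification of the Jones polynomial: for a diagram $D$ with $m$ ordered crossings, one forms the cube of resolutions, assigns to each complete resolution $D_\epsilon$, $\epsilon\in\{0,1\}^m$, the tensor product of copies of $V=\mathbb{Z}\langle 1,X\rangle$ ($\deg 1=1$, $\deg X=-1$) over its circles, sets $C^i(D)=\bigoplus_{|\epsilon|=i}M_\epsilon\{i\}$, with differential the signed sum of edge maps given by the multiplication $m(1\otimes1)=1$, $m(1\otimes X)=m(X\otimes 1)=X$, $m(X\otimes X)=0$ and comultiplication $\Delta(1)=1\otimes X+X\otimes 1$, $\Delta(X)=X\otimes X$; the invariant complex is $C(D)[-n_-]\{n_+-2n_-\}$, where $n_\pm$ are the numbers of positive/negative crossings, and $\mathcal{H}^i(K)$ is its homology in homological degree $i$. With these conventions a diagram with only positive crossings has no homological shift. *)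

theory Defs
  imports Main
begin

text \<open>
A braid word on p strands is a list w of generator indices i (1 \<le> i < p),
entry w!k standing for sigma_i (positive powers only).  Crossing k (k < length w)
sits between level k and level k+1; strands are numbered 1..p.  Vertices of the
diagram are (level, strand) with level in 0..length w; level length w is glued
to level 0 (braid closure).  At each crossing the local picture is given by a
mode: 0 = 0-smoothing (oriented resolution of a positive crossing),
1 = 1-smoothing, 2 = the crossing itself (used to count link components).
\<close>

definition crossing_edges :: "nat \<Rightarrow> nat \<Rightarrow> nat \<Rightarrow> nat \<Rightarrow> ((nat \<times> nat) \<times> (nat \<times> nat)) set" where
  "crossing_edges p k i mode =
     {((k, j), (Suc k, j)) | j. j \<in> {1..p} \<and> j \<noteq> i \<and> j \<noteq> Suc i} \<union>
     (if mode = 0 then {((k, i), (Suc k, i)), ((k, Suc i), (Suc k, Suc i))}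
      else if mode = 1 then {((k, i), (k, Suc i)), ((Suc k, i), (Suc k, Suc i))}
      else {((k, i), (Suc k, Suc i)), ((k, Suc i), (Suc k, i))})"

definition diagram_vertices :: "nat \<Rightarrow> nat list \<Rightarrow> (nat \<times> nat) set" where
  "diagram_vertices p w = {0..length w} \<times> {1..p}"

definition diagram_edges :: "nat \<Rightarrow> nat list \<Rightarrow> (nat \<Rightarrow> nat) \<Rightarrow> ((nat \<times> nat) \<times> (nat \<times> nat)) set" where
  "diagram_edges p w mode =
     {((length w, j), (0, j)) | j. j \<in> {1..p}} \<union>
     (\<Union>k<length w. crossing_edges p k (w ! k) (mode k))"

definition components :: "nat \<Rightarrow> nat list \<Rightarrow> (nat \<Rightarrow> nat) \<Rightarrow> (nat \<times> nat) set set" where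
  "components p w mode =
     diagram_vertices p w // ((diagram_edges p w mode \<union> (diagram_edges p w mode)\<inverse>)\<^sup>*)"

definition is_knot_closure :: "nat \<Rightarrow> nat list \<Rightarrow> bool" where
  "is_knot_closure p w \<longleftrightarrow> card (components p w (\<lambda>_. 2)) = 1"

definition circles :: "nat \<Rightarrow> nat list \<Rightarrow> nat set \<Rightarrow> (nat \<times> nat) set set" where
  "circles p w E = components p w (\<lambda>k. if k \<in> E then 1 else 0)"

type_synonym kh_gen = "nat set \<times> (nat \<times> nat) set set"

text \<open>Standard basis of the Khovanov complex: a resolution E together with the set S
of its circles labelled X (the others labelled 1).\<close>
definition kh_gens :: "nat \<Rightarrow> nat list \<Rightarrow> kh_gen set" where
  "kh_gens p w = {(E, S). E \<subseteq> {..<length w} \<and> S \<subseteq> circles p w E}"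

definition hdeg :: "kh_gen \<Rightarrow> nat" where
  "hdeg g = card (fst g)"

text \<open>Quantum degree: deg in V tensor power, plus shift {i}, plus {n_+ - 2 n_-} with
n_+ = length w, n_- = 0 (all crossings positive; no homological shift).\<close>
definition qdeg :: "nat \<Rightarrow> nat list \<Rightarrow> kh_gen \<Rightarrow> int" where
  "qdeg p w g = int (card (circles p w (fst g))) - 2 * int (card (snd g))
                + int (card (fst g)) + int (length w)"

text \<open>Matrix coefficient of the Khovanov differential from g to g' (edge maps m / Delta
with the sign (-1)^(number of 1-smoothed crossings before the changed one)).\<close>
definition edge_coeff :: "nat \<Rightarrow> nat list \<Rightarrow> kh_gen \<Rightarrow> kh_gen \<Rightarrow> int" where
  "edge_coeff p w g g' =
    (let E = fst g; S = snd g; E' = fst g'; S' = snd g';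
         A = circles p w E - circles p w E'; A' = circles p w E' - circles p w E
     in if (\<exists>k. k < length w \<and> k \<notin> E \<and> E' = insert k E) \<and> S - A = S' - A' \<and>
           ((card A = 2 \<and> card A' = 1 \<and>
               ((S \<inter> A = {} \<and> S' \<inter> A' = {}) \<or> (card (S \<inter> A) = 1 \<and> S' \<inter> A' = A'))) \<or>
            (card A = 1 \<and> card A' = 2 \<and>
               ((S \<inter> A = {} \<and> card (S' \<inter> A') = 1) \<or> (S \<inter> A = A \<and> S' \<inter> A' = A'))))
        then (-1) ^ card {j \<in> E. j < Min (E' - E)} else 0)"

definition kh_d :: "nat \<Rightarrow> nat list \<Rightarrow> (kh_gen \<Rightarrow> int) \<Rightarrow> (kh_gen \<Rightarrow> int)" where
  "kh_d p w c = (\<lambda>g'. \<Sum>g\<in>kh_gens p w. edge_coeff p w g g' * c g)"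

definition kh_chain :: "nat \<Rightarrow> nat list \<Rightarrow> nat \<Rightarrow> int \<Rightarrow> (kh_gen \<Rightarrow> int) \<Rightarrow> bool" where
  "kh_chain p w i j c \<longleftrightarrow>
     (\<forall>g. c g \<noteq> 0 \<longrightarrow> g \<in> kh_gens p w \<and> hdeg g = i \<and> qdeg p w g = j)"

definition kh_vanishes :: "nat \<Rightarrow> nat list \<Rightarrow> nat \<Rightarrow> int \<Rightarrow> bool" where
  "kh_vanishes p w i j \<longleftrightarrow>
     (\<forall>c. kh_chain p w i j c \<and> kh_d p w c = (\<lambda>_. 0) \<longrightarrow>
        (\<exists>b. kh_chain p w (i - 1) j b \<and> kh_d p w b = c))"

end

theory Submission
  imports Defs
begin

definition merge_dual :: "nat \<Rightarrow> nat \<Rightarrow> (nat set \<Rightarrow> int) \<Rightarrow> nat set \<Rightarrow> int" where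
  "merge_dual x y f T = (if x \<in> T then f T + f (insert y (T - {x})) else f T)"

lemma merge_dual_insert_commute:
  assumes "q \<noteq> x" "q \<noteq> y"
  shows "merge_dual x y (\<lambda>T. f (insert q T)) T = merge_dual x y f (insert q T)"
proof -
  have "insert q (insert y (T - {x})) = insert y (insert q T - {x})" using assms by auto
  then show ?thesis using assms unfolding merge_dual_def by auto
qed

lemma merge_dual_cong:
  assumes "f T = g T" "x \<in> T \<Longrightarrow> f (insert y (T - {x})) = g (insert y (T - {x}))"
  shows "merge_dual x y f T = merge_dual x y g T"
  using assms unfolding merge_dual_def by simp

lemma merge_dual_glue_top:
  assumes "Suc i < q"
  shows "merge_dual i (Suc i) (\<lambda>T. if q \<in> T then v (T - {q}) else g T) T =
    (if q \<in> T then merge_dual i (Suc i) v (T - {q}) else merge_dual i (Suc i) g T)"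
proof -
  have "insert (Suc i) (T - {i}) - {q} = insert (Suc i) (T - {q} - {i})" using assms by auto
  then show ?thesis using assms unfolding merge_dual_def by auto
qed

lemma merge_dual_card_restrict:
  assumes "finite T" "y \<notin> T"
  shows "merge_dual x y (\<lambda>T. if P (card T) then f T else 0) T =
    (if P (card T) then merge_dual x y f T else 0)"
proof -
  have "card (insert y (T - {x})) = card T" if "x \<in> T"
    using assms that card_insert_disjoint[of "T - {x}" y] card_Suc_Diff1[of T x] by simp
  then show ?thesis unfolding merge_dual_def by auto
qed

lemma merge_dual_top_correction:
  fixes a :: "nat \<Rightarrow> nat set \<Rightarrow> int"
  assumes i: "Suc i \<le> q"
    and T: "T \<subseteq> {1..q} - {Suc i}"
    and v: "\<And>T. T \<subseteq> {1..q} - {Suc i} \<Longrightarrow> merge_dual i (Suc i) v T = a i (insert (Suc q) T)"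
    and far: "i + 2 \<le> q \<Longrightarrow> merge_dual q (Suc q) (a i) T = merge_dual i (Suc i) (a q) T"
    and adj: "Suc i = q \<Longrightarrow> merge_dual i (i + 2) (a i) T = merge_dual i (Suc i) (a q) T"
  shows "merge_dual i (Suc i) (\<lambda>T. a q T - (if q \<in> T then v (T - {q}) else 0)) T = a i T"
proof (cases "i + 2 \<le> q")
  case True
  have "merge_dual i (Suc i) (\<lambda>T. a q T - (if q \<in> T then v (T - {q}) else 0)) T
      = merge_dual i (Suc i) (a q) T - (if q \<in> T then merge_dual i (Suc i) v (T - {q}) else 0)"
  proof -
    have "insert (Suc i) (T - {i}) - {q} = insert (Suc i) (T - {q} - {i})" using True by auto
    then show ?thesis using True unfolding merge_dual_def by auto
  qed
  also have "\<dots> = merge_dual q (Suc q) (a i) T - (if q \<in> T then a i (insert (Suc q) (T - {q})) else 0)"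
    using far True v[of "T - {q}"] T by auto
  also have "\<dots> = a i T" unfolding merge_dual_def by simp
  finally show ?thesis .
next
  case False
  then have q: "q = Suc i" using i by simp
  then have "q \<notin> T" using T by auto
  have "i \<in> T \<Longrightarrow> v (T - {i}) = a i (insert (Suc q) (T - {i}))"
    using v[of "T - {i}"] T unfolding merge_dual_def by auto
  moreover have "insert q (T - {i}) - {q} = T - {i}" using \<open>q \<notin> T\<close> by auto
  ultimately show ?thesis
    using adj q \<open>q \<notin> T\<close> unfolding merge_dual_def by (auto simp: numeral_2_eq_2)
qed

lemma merge_dual_primitive_exists:
  fixes a :: "nat \<Rightarrow> nat set \<Rightarrow> int"
  assumes "G \<subseteq> {1..<q}"
    and "\<And>i j T. i \<in> G \<Longrightarrow> j \<in> G \<Longrightarrow> i + 2 \<le> j \<Longrightarrow> T \<subseteq> {1..q} - {Suc i, Suc j} \<Longrightarrow>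
           merge_dual j (Suc j) (a i) T = merge_dual i (Suc i) (a j) T"
    and "\<And>i T. i \<in> G \<Longrightarrow> Suc i \<in> G \<Longrightarrow> T \<subseteq> {1..q} - {Suc i, i + 2} \<Longrightarrow>
           merge_dual i (i + 2) (a i) T = merge_dual i (Suc i) (a (Suc i)) T"
  shows "\<exists>f. \<forall>i\<in>G. \<forall>T. T \<subseteq> {1..q} - {Suc i} \<longrightarrow> merge_dual i (Suc i) f T = a i T"
  using assms
proof (induction q arbitrary: G a)
  case 0
  then show ?case by auto
next
  case (Suc q)
  note G = Suc.prems(1) and far = Suc.prems(2) and adj = Suc.prems(3)
  define a' where "a' = (\<lambda>i T. a i (insert (Suc q) T))"
  have "\<exists>v. \<forall>i\<in>G - {q}. \<forall>T. T \<subseteq> {1..q} - {Suc i} \<longrightarrow> merge_dual i (Suc i) v T = a' i T"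
  proof (rule Suc.IH)
    show "G - {q} \<subseteq> {1..<q}" using G by auto
  next
    fix i j T assume ij: "i \<in> G - {q}" "j \<in> G - {q}" "i + 2 \<le> j" "T \<subseteq> {1..q} - {Suc i, Suc j}"
    then have "j < q" "insert (Suc q) T \<subseteq> {1..Suc q} - {Suc i, Suc j}" using G by auto
    then show "merge_dual j (Suc j) (a' i) T = merge_dual i (Suc i) (a' j) T"
      using far[of i j "insert (Suc q) T"] ij unfolding a'_def
      by (simp add: merge_dual_insert_commute)
  next
    fix i T assume i: "i \<in> G - {q}" "Suc i \<in> G - {q}" "T \<subseteq> {1..q} - {Suc i, i + 2}"
    then have "Suc i < q" "insert (Suc q) T \<subseteq> {1..Suc q} - {Suc i, i + 2}" using G by auto
    then show "merge_dual i (i + 2) (a' i) T = merge_dual i (Suc i) (a' (Suc i)) T"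
      using adj[of i "insert (Suc q) T"] i unfolding a'_def
      by (simp add: merge_dual_insert_commute)
  qed
  then obtain v where v: "\<And>i T. i \<in> G - {q} \<Longrightarrow> T \<subseteq> {1..q} - {Suc i} \<Longrightarrow>
      merge_dual i (Suc i) v T = a' i T"
    by auto
  obtain g where g_low: "\<And>i T. i \<in> G - {q} \<Longrightarrow> T \<subseteq> {1..q} - {Suc i} \<Longrightarrow>
      merge_dual i (Suc i) g T = a i T"
    and g_top: "\<And>T. q \<in> G \<Longrightarrow> g T = a q T - (if q \<in> T then v (T - {q}) else 0)"
  proof (cases "q \<in> G")
    case True
    show thesis
    proof (rule that)
      fix i T assume i: "i \<in> G - {q}" and T: "T \<subseteq> {1..q} - {Suc i}"
      have "Suc i \<le> q" using i G by auto
      then show "merge_dual i (Suc i) (\<lambda>T. a q T - (if q \<in> T then v (T - {q}) else 0)) T = a i T"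
      proof (rule merge_dual_top_correction[OF _ T])
        show "merge_dual i (Suc i) v T' = a i (insert (Suc q) T')" if "T' \<subseteq> {1..q} - {Suc i}" for T'
          using v[OF i that] unfolding a'_def .
        have T': "T \<subseteq> {1..Suc q} - {Suc i, Suc q}" using T by auto
        then show "merge_dual q (Suc q) (a i) T = merge_dual i (Suc i) (a q) T" if "i + 2 \<le> q"
          using far[of i q T] i that True by auto
        show "merge_dual i (i + 2) (a i) T = merge_dual i (Suc i) (a q) T" if "Suc i = q"
          using adj[of i T] i T' that True by auto
      qed
    qed simp
  next
    case False
    have "\<exists>u. \<forall>i\<in>G. \<forall>T. T \<subseteq> {1..q} - {Suc i} \<longrightarrow> merge_dual i (Suc i) u T = a i T"
    proof (rule Suc.IH)
      show "G \<subseteq> {1..<q}" using G False by (auto simp: less_Suc_eq)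
      have sub: "{1..q} - X \<subseteq> {1..Suc q} - X" for X by auto
      show "merge_dual j (Suc j) (a i) T = merge_dual i (Suc i) (a j) T"
        if "i \<in> G" "j \<in> G" "i + 2 \<le> j" "T \<subseteq> {1..q} - {Suc i, Suc j}" for i j T
        using far that sub by (meson subset_trans)
      show "merge_dual i (i + 2) (a i) T = merge_dual i (Suc i) (a (Suc i)) T"
        if "i \<in> G" "Suc i \<in> G" "T \<subseteq> {1..q} - {Suc i, i + 2}" for i T
        using adj that sub by (meson subset_trans)
    qed
    then obtain u where "\<And>i T. i \<in> G \<Longrightarrow> T \<subseteq> {1..q} - {Suc i} \<Longrightarrow>
        merge_dual i (Suc i) u T = a i T"
      by auto
    with False show thesis using that by blast
  qed
  define f where "f = (\<lambda>T. if Suc q \<in> T then v (T - {Suc q}) else g T)"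
  have "merge_dual i (Suc i) f T = a i T" if i: "i \<in> G" and T: "T \<subseteq> {1..Suc q} - {Suc i}" for i T
  proof (cases "i = q")
    case True
    then show ?thesis using T g_top i unfolding f_def merge_dual_def by auto
  next
    case False
    then have "Suc i < Suc q" using i G by auto
    moreover have "T - {Suc q} \<subseteq> {1..q} - {Suc i}" "Suc q \<notin> T \<Longrightarrow> T \<subseteq> {1..q} - {Suc i}"
      using T by (auto simp: le_Suc_eq)
    ultimately show ?thesis
      using v[of i "T - {Suc q}"] g_low[of i T] i False
      unfolding merge_dual_glue_top[OF \<open>Suc i < Suc q\<close>, of v g T, folded f_def] a'_def
      by (auto simp: insert_absorb)
  qed
  then show ?case by blast
qed

definition smoothing :: "nat set \<Rightarrow> nat \<Rightarrow> nat" where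
  "smoothing E k = (if k \<in> E then 1 else 0)"

lemma smoothing_eq_0_iff [simp]: "smoothing E k = 0 \<longleftrightarrow> k \<notin> E"
  and smoothing_eq_1_iff [simp]: "smoothing E k = Suc 0 \<longleftrightarrow> k \<in> E"
  unfolding smoothing_def by auto

lemma circles_eq_components: "circles p w E = components p w (smoothing E)"
  unfolding circles_def smoothing_def by simp

definition diagram_path :: "nat \<Rightarrow> nat list \<Rightarrow> (nat \<Rightarrow> nat) \<Rightarrow> ((nat \<times> nat) \<times> (nat \<times> nat)) set" where
  "diagram_path p w mode = (diagram_edges p w mode \<union> (diagram_edges p w mode)\<inverse>)\<^sup>*"

lemma diagram_path_refl [simp]: "(x, x) \<in> diagram_path p w mode"
  unfolding diagram_path_def by simp

lemma diagram_path_edge: "(x, y) \<in> diagram_edges p w mode \<Longrightarrow> (x, y) \<in> diagram_path p w mode"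
  unfolding diagram_path_def by auto

lemma diagram_path_sym: "(x, y) \<in> diagram_path p w mode \<Longrightarrow> (y, x) \<in> diagram_path p w mode"
  unfolding diagram_path_def by (metis converse_Un converse_converse rtrancl_converseI sup_commute)

lemma diagram_path_trans:
  "(x, y) \<in> diagram_path p w mode \<Longrightarrow> (y, z) \<in> diagram_path p w mode \<Longrightarrow> (x, z) \<in> diagram_path p w mode"
  unfolding diagram_path_def by (rule rtrancl_trans)

lemma diagram_path_to_left:
  assumes "((a, x), (a, Suc x)) \<in> diagram_path p w mode" "j \<in> {x, Suc x}"
  shows "((a, j), (a, x)) \<in> diagram_path p w mode"
  using assms by (auto dest: diagram_path_sym)

lemma vertical_edge:
  assumes "m < length w" "j \<in> {1..p}" "mode m = 0 \<or> j \<notin> {w!m, Suc (w!m)}"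
  shows "((m, j), (Suc m, j)) \<in> diagram_edges p w mode"
proof -
  have "((m, j), (Suc m, j)) \<in> crossing_edges p m (w!m) (mode m)"
    using assms unfolding crossing_edges_def by auto
  then show ?thesis using assms(1) unfolding diagram_edges_def by blast
qed

lemma horizontal_edge:
  assumes "m < length w" "mode m = 1" "a \<in> {m, Suc m}"
  shows "((a, w!m), (a, Suc (w!m))) \<in> diagram_edges p w mode"
proof -
  have "((a, w!m), (a, Suc (w!m))) \<in> crossing_edges p m (w!m) (mode m)"
    using assms unfolding crossing_edges_def by auto
  then show ?thesis using assms(1) unfolding diagram_edges_def by blast
qed

lemma closure_edge: "j \<in> {1..p} \<Longrightarrow> ((length w, j), (0, j)) \<in> diagram_edges p w mode"
  unfolding diagram_edges_def by blast

lemma vertical_path: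
  assumes "a \<le> b" "b \<le> length w" "j \<in> {1..p}"
    and "\<And>m. a \<le> m \<Longrightarrow> m < b \<Longrightarrow> mode m = 0 \<or> j \<notin> {w!m, Suc (w!m)}"
  shows "((a, j), (b, j)) \<in> diagram_path p w mode"
  using assms(1)
proof (induction b rule: dec_induct)
  case (step n)
  have "((n, j), (Suc n, j)) \<in> diagram_edges p w mode"
    using step(1,2) assms(2,3) assms(4)[of n] by (intro vertical_edge) auto
  then show ?case by (rule diagram_path_trans[OF step.IH diagram_path_edge])
qed simp

lemma path_to_level0:
  assumes "a \<le> length w" "j \<in> {1..p}"
    and "(\<forall>m<a. mode m = 0 \<or> j \<notin> {w!m, Suc (w!m)}) \<or>
         (\<forall>m. a \<le> m \<and> m < length w \<longrightarrow> mode m = 0 \<or> j \<notin> {w!m, Suc (w!m)})"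
  shows "((a, j), (0, j)) \<in> diagram_path p w mode"
  using assms(3)
proof
  assume "\<forall>m<a. mode m = 0 \<or> j \<notin> {w!m, Suc (w!m)}"
  then show ?thesis using assms(1,2) vertical_path[of 0 a w j p mode] diagram_path_sym by auto
next
  assume "\<forall>m. a \<le> m \<and> m < length w \<longrightarrow> mode m = 0 \<or> j \<notin> {w!m, Suc (w!m)}"
  then have "((a, j), (length w, j)) \<in> diagram_path p w mode"
    using assms(1,2) by (intro vertical_path) auto
  then show ?thesis using closure_edge[OF assms(2)] diagram_path_edge diagram_path_trans by blast
qed

text \<open>A strand meeting at most one 1-smoothed crossing can be followed to level 0 on the free side.\<close>

lemma path_to_level0_smoothing:
  assumes "a \<le> length w" "j \<in> {1..p}"
    and "\<And>m m'. m \<in> E \<Longrightarrow> m' \<in> E \<Longrightarrow> j \<in> {w!m, Suc (w!m)} \<Longrightarrow> j \<in> {w!m', Suc (w!m')} \<Longrightarrow> m = m'"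
  shows "((a, j), (0, j)) \<in> diagram_path p w (smoothing E)"
proof (cases "\<exists>c\<in>E. j \<in> {w!c, Suc (w!c)}")
  case True
  then obtain c where c: "c \<in> E" "j \<in> {w!c, Suc (w!c)}" by blast
  then have "m \<notin> E \<or> j \<notin> {w!m, Suc (w!m)}" if "m \<noteq> c" for m
    using assms(3) that by blast
  then show ?thesis
    by (intro path_to_level0[OF assms(1,2)]) (cases "a \<le> c"; auto)
next
  case False
  then show ?thesis by (intro path_to_level0[OF assms(1,2)]) auto
qed

lemma diagram_edge_smoothingE:
  assumes "(x, y) \<in> diagram_edges p w (smoothing E)"
  obtains (closure) j where "x = (length w, j)" "y = (0, j)"
  | (vertical) m j where "m < length w" "x = (m, j)" "y = (Suc m, j)"
      "m \<notin> E \<or> j \<notin> {w!m, Suc (w!m)}"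
  | (horizontal) m a where "m \<in> E" "m < length w" "a \<in> {m, Suc m}"
      "x = (a, w!m)" "y = (a, Suc (w!m))"
  using assms unfolding diagram_edges_def crossing_edges_def smoothing_def
  by (auto split: if_splits)

definition columns :: "nat list \<Rightarrow> nat set \<Rightarrow> (nat \<times> nat) set" where
  "columns w J = {0..length w} \<times> J"

lemma columns_eq_iff [simp]: "columns w J = columns w J' \<longleftrightarrow> J = J'"
  unfolding columns_def by (metis Sigma_empty2 atLeastAtMost_iff times_eq_iff empty_iff zero_le)

lemma image_eq_reindex:
  assumes "D \<subseteq> A" "\<And>x. x \<in> D \<Longrightarrow> g x = f x" "\<And>y. y \<in> A \<Longrightarrow> \<exists>x\<in>D. f y = f x"
  shows "f ` A = g ` D"
proof
  show "f ` A \<subseteq> g ` D" using assms(2,3) by force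
  show "g ` D \<subseteq> f ` A" using assms(1,2) by auto
qed

definition circle_of :: "nat list \<Rightarrow> nat \<Rightarrow> nat \<Rightarrow> (nat \<times> nat) set" where
  "circle_of w i x = columns w (if x = i then {i, Suc i} else {x})"

context
  fixes p :: nat and w :: "nat list"
  assumes letters: "\<forall>i\<in>set w. 1 \<le> i \<and> i < p"
begin

lemma letter_bounds: "k < length w \<Longrightarrow> 1 \<le> w!k \<and> w!k < p"
  using letters by auto

lemma diagram_edge_vertices:
  assumes "(x, y) \<in> diagram_edges p w mode"
  shows "x \<in> diagram_vertices p w \<and> y \<in> diagram_vertices p w"
proof -
  consider j where "x = (length w, j)" "y = (0, j)" "j \<in> {1..p}"
    | m where "m < length w" "(x, y) \<in> crossing_edges p m (w!m) (mode m)"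
    using assms unfolding diagram_edges_def by auto
  then show ?thesis
  proof cases
    case (2 m)
    then show ?thesis
      using letter_bounds[of m] unfolding crossing_edges_def diagram_vertices_def
      by (auto split: if_splits)
  qed (auto simp: diagram_vertices_def)
qed

lemma level0_link_first:
  assumes "k < length w" "k \<in> E" "\<forall>m<k. m \<notin> E"
  shows "((0, w!k), (0, Suc (w!k))) \<in> diagram_path p w (smoothing E)"
proof -
  have "((0, j), (k, j)) \<in> diagram_path p w (smoothing E)" if "j \<in> {w!k, Suc (w!k)}" for j
    using assms that letter_bounds[OF assms(1)] by (intro vertical_path) auto
  moreover have "((k, w!k), (k, Suc (w!k))) \<in> diagram_path p w (smoothing E)"
    using assms by (intro diagram_path_edge horizontal_edge) auto
  ultimately show ?thesis by (meson diagram_path_sym diagram_path_trans insertCI)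
qed

lemma level0_link_last:
  assumes "k < length w" "k \<in> E" "\<forall>m. k < m \<and> m < length w \<longrightarrow> m \<notin> E"
  shows "((0, w!k), (0, Suc (w!k))) \<in> diagram_path p w (smoothing E)"
proof -
  have "((Suc k, j), (0, j)) \<in> diagram_path p w (smoothing E)" if "j \<in> {w!k, Suc (w!k)}" for j
    using assms that letter_bounds[OF assms(1)] by (intro path_to_level0) auto
  moreover have "((Suc k, w!k), (Suc k, Suc (w!k))) \<in> diagram_path p w (smoothing E)"
    using assms by (intro diagram_path_edge horizontal_edge) auto
  ultimately show ?thesis by (meson diagram_path_sym diagram_path_trans insertCI)
qed

lemma level0_links_pair:
  assumes "k \<noteq> l" "k < length w" "l < length w"
  shows "((0, w!k), (0, Suc (w!k))) \<in> diagram_path p w (smoothing {k, l})"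
proof (cases "k < l")
  case True
  then show ?thesis using assms by (intro level0_link_first) auto
next
  case False
  then show ?thesis using assms by (intro level0_link_last) auto
qed

lemma path_to_partner:
  assumes "c \<in> E" "c < a" "a \<le> length w" "j \<in> {w!c, Suc (w!c)}" "j' \<in> {w!c, Suc (w!c)}"
    and "\<And>m. c < m \<Longrightarrow> m < a \<Longrightarrow> m \<notin> E \<or> j \<notin> {w!m, Suc (w!m)}"
  shows "((a, j), (Suc c, j')) \<in> diagram_path p w (smoothing E)"
proof -
  have "((Suc c, j), (a, j)) \<in> diagram_path p w (smoothing E)"
    using assms letter_bounds[of c] by (intro vertical_path) auto
  moreover have "((Suc c, w!c), (Suc c, Suc (w!c))) \<in> diagram_path p w (smoothing E)"
    using assms by (intro diagram_path_edge horizontal_edge) auto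
  ultimately show ?thesis
    using assms(4,5) by (auto intro: diagram_path_sym diagram_path_trans)
qed

lemma circles_eq_image:
  fixes cl :: "nat \<times> nat \<Rightarrow> (nat \<times> nat) set"
  assumes edge: "\<And>x y. (x, y) \<in> diagram_edges p w (smoothing E) \<Longrightarrow> cl x = cl y"
    and self: "\<And>x. x \<in> diagram_vertices p w \<Longrightarrow> x \<in> cl x"
    and sub: "\<And>x. x \<in> diagram_vertices p w \<Longrightarrow> cl x \<subseteq> diagram_vertices p w"
    and conn: "\<And>x y. x \<in> diagram_vertices p w \<Longrightarrow> y \<in> cl x \<Longrightarrow>
      (x, y) \<in> diagram_path p w (smoothing E)"
  shows "circles p w E = cl ` diagram_vertices p w"
proof -
  let ?R = "diagram_path p w (smoothing E)"
  have "?R `` {x} = cl x" if x: "x \<in> diagram_vertices p w" for x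
  proof
    show "?R `` {x} \<subseteq> cl x"
    proof
      fix y assume "y \<in> ?R `` {x}"
      then have "(x, y) \<in> (diagram_edges p w (smoothing E) \<union> (diagram_edges p w (smoothing E))\<inverse>)\<^sup>*"
        unfolding diagram_path_def by simp
      then have "y \<in> diagram_vertices p w \<and> cl y = cl x"
      proof (induction rule: rtrancl_induct)
        case (step y z)
        then show ?case using edge diagram_edge_vertices by blast
      qed (simp add: x)
      then show "y \<in> cl x" using self by metis
    qed
    show "cl x \<subseteq> ?R `` {x}" using conn x by blast
  qed
  then have "components p w (smoothing E) = (\<Union>x\<in>diagram_vertices p w. {cl x})"
    unfolding components_def quotient_def diagram_path_def[symmetric] by simp
  then show ?thesis unfolding circles_eq_components by blast
qed

lemma circles_by_blocks:
  fixes \<beta> :: "nat \<Rightarrow> nat set"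
  assumes block: "\<And>j. j \<in> {1..p} \<Longrightarrow> j \<in> \<beta> j \<and> \<beta> j \<subseteq> {1..p} \<and> (\<forall>j'\<in>\<beta> j. \<beta> j' = \<beta> j)"
    and merge: "\<And>m. m \<in> E \<Longrightarrow> m < length w \<Longrightarrow> \<beta> (w!m) = \<beta> (Suc (w!m))"
    and reach: "\<And>a j. a \<le> length w \<Longrightarrow> j \<in> {1..p} \<Longrightarrow>
      \<exists>j'\<in>\<beta> j. ((a, j), (0, j')) \<in> diagram_path p w (smoothing E)"
    and link: "\<And>j j'. j \<in> {1..p} \<Longrightarrow> j' \<in> \<beta> j \<Longrightarrow>
      ((0, j), (0, j')) \<in> diagram_path p w (smoothing E)"
  shows "circles p w E = (\<lambda>j. columns w (\<beta> j)) ` {1..p}"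
proof -
  have "circles p w E = (\<lambda>x. columns w (\<beta> (snd x))) ` diagram_vertices p w"
  proof (rule circles_eq_image)
    fix x y assume "(x, y) \<in> diagram_edges p w (smoothing E)"
    then show "columns w (\<beta> (snd x)) = columns w (\<beta> (snd y))"
      by (cases rule: diagram_edge_smoothingE) (auto simp: merge)
  next
    fix x assume "x \<in> diagram_vertices p w"
    then show "x \<in> columns w (\<beta> (snd x))" "columns w (\<beta> (snd x)) \<subseteq> diagram_vertices p w"
      using block unfolding diagram_vertices_def columns_def by (auto simp: mem_Times_iff)
  next
    fix x y assume x: "x \<in> diagram_vertices p w" and y: "y \<in> columns w (\<beta> (snd x))"
    obtain a j b j' where xy: "x = (a, j)" "y = (b, j')" by fastforce
    have a: "a \<le> length w" "j \<in> {1..p}" and b: "b \<le> length w" "j' \<in> \<beta> j"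
      using x y unfolding xy diagram_vertices_def columns_def by auto
    then have j': "j' \<in> {1..p}" "\<beta> j' = \<beta> j" using block by blast+
    obtain j1 where j1: "j1 \<in> \<beta> j" "((a, j), (0, j1)) \<in> diagram_path p w (smoothing E)"
      using reach a by blast
    obtain j2 where j2: "j2 \<in> \<beta> j" "((b, j'), (0, j2)) \<in> diagram_path p w (smoothing E)"
      using reach[OF b(1) j'(1)] j'(2) by auto
    have "((0, j1), (0, j2)) \<in> diagram_path p w (smoothing E)"
      using link[OF a(2) j1(1)] link[OF a(2) j2(1)] diagram_path_sym diagram_path_trans by blast
    then show "(x, y) \<in> diagram_path p w (smoothing E)"
      unfolding xy using j1(2) j2(2) diagram_path_sym diagram_path_trans by blast
  qed
  also have "\<dots> = (\<lambda>j. columns w (\<beta> j)) ` (snd ` diagram_vertices p w)"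
    by (simp add: image_image)
  finally show ?thesis by (simp add: diagram_vertices_def)
qed

lemma circles_empty: "circles p w {} = (\<lambda>j. columns w {j}) ` {1..p}"
  by (rule circles_by_blocks) (auto intro: path_to_level0_smoothing)

lemma circles_singleton:
  assumes k: "k < length w"
  shows "circles p w {k} = circle_of w (w!k) ` ({1..p} - {Suc (w!k)})"
proof -
  define i where "i = w!k"
  have i: "1 \<le> i" "i < p" using letter_bounds[OF k] unfolding i_def by auto
  define \<beta> where "\<beta> j = (if j \<in> {i, Suc i} then {i, Suc i} else {j})" for j
  have link: "((0, i), (0, Suc i)) \<in> diagram_path p w (smoothing {k})"
    unfolding i_def using k by (intro level0_link_first) auto
  have "circles p w {k} = (\<lambda>j. columns w (\<beta> j)) ` {1..p}"
  proof (rule circles_by_blocks)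
    show "\<exists>j'\<in>\<beta> j. ((a, j), (0, j')) \<in> diagram_path p w (smoothing {k})"
      if "a \<le> length w" "j \<in> {1..p}" for a j
      using path_to_level0_smoothing[OF that, of "{k}"] unfolding \<beta>_def by auto
    show "((0, j), (0, j')) \<in> diagram_path p w (smoothing {k})" if "j' \<in> \<beta> j" for j j'
      using that link diagram_path_sym unfolding \<beta>_def by (auto split: if_splits)
  qed (use i in \<open>auto simp: \<beta>_def i_def\<close>)
  also have "\<dots> = circle_of w i ` ({1..p} - {Suc i})"
    by (rule image_eq_reindex) (use i in \<open>auto simp: circle_of_def \<beta>_def\<close>)
  finally show ?thesis unfolding i_def .
qed

lemma circles_pair_far:
  assumes kl: "k < length w" "l < length w" and far: "w!k + 2 \<le> w!l"
  shows "circles p w {k, l} = (\<lambda>x. columns w (if x = w!k then {w!k, Suc (w!k)}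
      else if x = w!l then {w!l, Suc (w!l)} else {x})) ` ({1..p} - {Suc (w!k), Suc (w!l)})"
proof -
  define B where "B = {w!k, Suc (w!k)}"
  define B' where "B' = {w!l, Suc (w!l)}"
  have BB': "B \<inter> B' = {}" "B \<subseteq> {1..p}" "B' \<subseteq> {1..p}"
    using far letter_bounds[OF kl(1)] letter_bounds[OF kl(2)] unfolding B_def B'_def by auto
  have "k \<noteq> l" using far by auto
  define \<beta> where "\<beta> j = (if j \<in> B then B else if j \<in> B' then B' else {j})" for j
  have linkB: "((0, w!k), (0, Suc (w!k))) \<in> diagram_path p w (smoothing {k, l})"
    using \<open>k \<noteq> l\<close> kl by (rule level0_links_pair)
  have linkB': "((0, w!l), (0, Suc (w!l))) \<in> diagram_path p w (smoothing {k, l})"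
    using level0_links_pair[of l k] \<open>k \<noteq> l\<close> kl by (simp add: insert_commute)
  have "circles p w {k, l} = (\<lambda>j. columns w (\<beta> j)) ` {1..p}"
  proof (rule circles_by_blocks)
    show "j \<in> \<beta> j \<and> \<beta> j \<subseteq> {1..p} \<and> (\<forall>j'\<in>\<beta> j. \<beta> j' = \<beta> j)" if "j \<in> {1..p}" for j
      using that BB' unfolding \<beta>_def by auto
    show "\<beta> (w!m) = \<beta> (Suc (w!m))" if "m \<in> {k, l}" for m
      using that BB'(1) unfolding \<beta>_def B_def B'_def by auto
    show "\<exists>j'\<in>\<beta> j. ((a, j), (0, j')) \<in> diagram_path p w (smoothing {k, l})"
      if "a \<le> length w" "j \<in> {1..p}" for a j
    proof -
      have "((a, j), (0, j)) \<in> diagram_path p w (smoothing {k, l})"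
      proof (rule path_to_level0_smoothing[OF that])
        show "m = m'" if "m \<in> {k, l}" "m' \<in> {k, l}" "j \<in> {w!m, Suc (w!m)}" "j \<in> {w!m', Suc (w!m')}"
          for m m'
          using that far by auto
      qed
      moreover have "j \<in> \<beta> j" unfolding \<beta>_def by simp
      ultimately show ?thesis by blast
    qed
    show "((0, j), (0, j')) \<in> diagram_path p w (smoothing {k, l})" if "j' \<in> \<beta> j" for j j'
    proof -
      have pair: "((0, j), (0, j')) \<in> diagram_path p w (smoothing {k, l})"
        if "j \<in> {x, Suc x}" "j' \<in> {x, Suc x}" "((0, x), (0, Suc x)) \<in> diagram_path p w (smoothing {k, l})"
        for j j' x
        using that diagram_path_sym by auto
      consider "j \<in> B" "j' \<in> B" | "j \<in> B'" "j' \<in> B'" | "j' = j"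
        using \<open>j' \<in> \<beta> j\<close> unfolding \<beta>_def by (auto split: if_splits)
      then show ?thesis
      proof cases
        case 1
        then show ?thesis using pair[OF _ _ linkB] unfolding B_def by blast
      next
        case 2
        then show ?thesis using pair[OF _ _ linkB'] unfolding B'_def by blast
      qed simp
    qed
  qed
  also have "\<dots> = (\<lambda>x. columns w (if x = w!k then B else if x = w!l then B' else {x}))
      ` ({1..p} - {Suc (w!k), Suc (w!l)})"
  proof (rule image_eq_reindex)
    have neq: "w!k \<noteq> w!l" "w!k \<noteq> Suc (w!l)" "Suc (w!k) \<noteq> w!l" "w!l \<noteq> Suc (w!k)" using far by auto
    show "columns w (if x = w!k then B else if x = w!l then B' else {x}) = columns w (\<beta> x)"
      if "x \<in> {1..p} - {Suc (w!k), Suc (w!l)}" for x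
      using that neq unfolding \<beta>_def B_def B'_def by simp
    show "\<exists>x\<in>{1..p} - {Suc (w!k), Suc (w!l)}. columns w (\<beta> y) = columns w (\<beta> x)"
      if "y \<in> {1..p}" for y
    proof -
      have "w!k \<in> B" "w!l \<in> B'" "w!l \<notin> B" unfolding B_def B'_def using neq by auto
      then have k: "w!k \<in> {1..p} - {Suc (w!k), Suc (w!l)}" "\<beta> (w!k) = B"
        and l: "w!l \<in> {1..p} - {Suc (w!k), Suc (w!l)}" "\<beta> (w!l) = B'"
        using BB' neq unfolding \<beta>_def by auto
      consider "y \<in> B" | "y \<notin> B" "y \<in> B'" | "y \<notin> B" "y \<notin> B'" by blast
      then show ?thesis
      proof cases
        case 1
        then show ?thesis using k by (intro bexI[of _ "w!k"]) (simp_all add: \<beta>_def)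
      next
        case 2
        then show ?thesis using l by (intro bexI[of _ "w!l"]) (simp_all add: \<beta>_def)
      next
        case 3
        then have "y \<in> {1..p} - {Suc (w!k), Suc (w!l)}"
          using \<open>y \<in> {1..p}\<close> unfolding B_def B'_def by simp
        then show ?thesis by blast
      qed
    qed
  qed simp
  finally show ?thesis unfolding B_def B'_def .
qed

lemma circles_pair_adjacent:
  assumes kl: "k < length w" "l < length w" and adj: "w!l = Suc (w!k)"
  shows "circles p w {k, l} = (\<lambda>x. columns w (if x = w!k then {w!k, Suc (w!k), Suc (Suc (w!k))}
      else {x})) ` ({1..p} - {Suc (w!k), Suc (Suc (w!k))})"
proof -
  define i where "i = w!k"
  define U where "U = {i, Suc i, Suc (Suc i)}"
  have U: "U \<subseteq> {1..p}"
    using letter_bounds[OF kl(1)] letter_bounds[OF kl(2)] adj unfolding U_def i_def by auto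
  have "k \<noteq> l" using adj by auto
  define \<beta> where "\<beta> j = (if j \<in> U then U else {j})" for j
  have to_middle: "((0, j), (0, Suc i)) \<in> diagram_path p w (smoothing {k, l})" if "j \<in> U" for j
  proof -
    have "((0, i), (0, Suc i)) \<in> diagram_path p w (smoothing {k, l})"
      unfolding i_def using \<open>k \<noteq> l\<close> kl by (rule level0_links_pair)
    moreover have "((0, Suc i), (0, Suc (Suc i))) \<in> diagram_path p w (smoothing {k, l})"
      using level0_links_pair[of l k] \<open>k \<noteq> l\<close> kl adj unfolding i_def by (simp add: insert_commute)
    ultimately show ?thesis using that diagram_path_sym unfolding U_def by auto
  qed
  have "circles p w {k, l} = (\<lambda>j. columns w (\<beta> j)) ` {1..p}"
  proof (rule circles_by_blocks)
    show "j \<in> \<beta> j \<and> \<beta> j \<subseteq> {1..p} \<and> (\<forall>j'\<in>\<beta> j. \<beta> j' = \<beta> j)" if "j \<in> {1..p}" for j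
      using that U unfolding \<beta>_def by auto
    show "\<beta> (w!m) = \<beta> (Suc (w!m))" if "m \<in> {k, l}" for m
      using that adj unfolding \<beta>_def U_def i_def by auto
    show "\<exists>j'\<in>\<beta> j. ((a, j), (0, j')) \<in> diagram_path p w (smoothing {k, l})"
      if a: "a \<le> length w" and j: "j \<in> {1..p}" for a j
    proof (cases "j = Suc i \<and> min k l < a \<and> a \<le> max k l")
      case True
      define c where "c = min k l"
      define j2 where "j2 = (if c = k then i else Suc (Suc i))"
      have c: "c \<in> {k, l}" "c < a" "\<And>m. c < m \<Longrightarrow> m < a \<Longrightarrow> m \<notin> {k, l}"
        using True unfolding c_def by auto
      have j2: "j \<in> {w!c, Suc (w!c)}" "j2 \<in> {w!c, Suc (w!c)}" "j2 \<in> U"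
        using True adj c(1) unfolding j2_def i_def U_def by auto
      have "((a, j), (Suc c, j2)) \<in> diagram_path p w (smoothing {k, l})"
        using c a j2 by (intro path_to_partner) auto
      moreover have "((Suc c, j2), (0, j2)) \<in> diagram_path p w (smoothing {k, l})"
      proof (rule path_to_level0_smoothing)
        show "Suc c \<le> length w" using c(2) a by simp
        show "j2 \<in> {1..p}" using j2(3) U by blast
        show "m = m'" if "m \<in> {k, l}" "m' \<in> {k, l}" "j2 \<in> {w!m, Suc (w!m)}" "j2 \<in> {w!m', Suc (w!m')}"
          for m m'
          using that adj unfolding j2_def i_def by (auto split: if_splits)
      qed
      ultimately have "((a, j), (0, j2)) \<in> diagram_path p w (smoothing {k, l})"
        by (rule diagram_path_trans)
      moreover have "j2 \<in> \<beta> j" using j2(3) True unfolding \<beta>_def U_def by simp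
      ultimately show ?thesis by blast
    next
      case False
      have "((a, j), (0, j)) \<in> diagram_path p w (smoothing {k, l})"
      proof (cases "j = Suc i")
        case True
        with False have "a \<le> min k l \<or> max k l < a" by auto
        then show ?thesis using a j by (intro path_to_level0) auto
      next
        case False
        show ?thesis
        proof (rule path_to_level0_smoothing[OF a j])
          show "m = m'" if "m \<in> {k, l}" "m' \<in> {k, l}" "j \<in> {w!m, Suc (w!m)}" "j \<in> {w!m', Suc (w!m')}"
            for m m'
            using that adj False unfolding i_def by auto
        qed
      qed
      moreover have "j \<in> \<beta> j" unfolding \<beta>_def by simp
      ultimately show ?thesis by blast
    qed
    show "((0, j), (0, j')) \<in> diagram_path p w (smoothing {k, l})" if "j' \<in> \<beta> j" for j j'
    proof (cases "j \<in> U")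
      case True
      then have "j' \<in> U" using that unfolding \<beta>_def by simp
      then show ?thesis
        using to_middle[OF True] to_middle[of j'] diagram_path_sym diagram_path_trans by blast
    next
      case False
      then show ?thesis using that unfolding \<beta>_def by simp
    qed
  qed
  also have "\<dots> = (\<lambda>x. columns w (if x = i then U else {x})) ` ({1..p} - {Suc i, Suc (Suc i)})"
  proof (rule image_eq_reindex)
    show "columns w (if x = i then U else {x}) = columns w (\<beta> x)"
      if "x \<in> {1..p} - {Suc i, Suc (Suc i)}" for x
      using that unfolding \<beta>_def U_def by simp
    show "\<exists>x\<in>{1..p} - {Suc i, Suc (Suc i)}. columns w (\<beta> y) = columns w (\<beta> x)"
      if "y \<in> {1..p}" for y
    proof (cases "y \<in> U")
      case True
      have "i \<in> {1..p} - {Suc i, Suc (Suc i)}" "\<beta> i = U" using U unfolding \<beta>_def U_def by auto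
      then show ?thesis using True unfolding \<beta>_def by (intro bexI[of _ i]) simp_all
    next
      case False
      then have "y \<in> {1..p} - {Suc i, Suc (Suc i)}" using that unfolding U_def by simp
      then show ?thesis by blast
    qed
  qed simp
  finally show ?thesis unfolding U_def i_def .
qed

text \<open>Two 1-smoothings of the same generator cut the merged circle of strands i, i+1 into the
  part between the two crossings and the part through the closure.\<close>

lemma circles_pair_same:
  assumes kl: "k < l" "l < length w" and same: "w!l = w!k"
  shows "circles p w {k, l} = (\<lambda>x. if x = w!k then ({0..k} \<union> {Suc l..length w}) \<times> {w!k, Suc (w!k)}
      else if x = Suc (w!k) then {Suc k..l} \<times> {w!k, Suc (w!k)} else columns w {x}) ` {1..p}"
proof -
  define i where "i = w!k"
  define B where "B = {i, Suc i}"
  define P where "P = {Suc k..l} \<times> B"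
  define Q where "Q = ({0..k} \<union> {Suc l..length w}) \<times> B"
  define inside where "inside a \<longleftrightarrow> k < a \<and> a \<le> l" for a
  define cl where "cl x = (if snd x \<in> B then if inside (fst x) then P else Q else columns w {snd x})"
    for x :: "nat \<times> nat"
  define root where "root x = (if snd x \<in> B then if inside (fst x) then (l, i) else (0, i) else (0, snd x))"
    for x :: "nat \<times> nat"
  have B: "B \<subseteq> {1..p}" using letter_bounds[of k] kl unfolding B_def i_def by auto
  have touch: "j \<in> {w!m, Suc (w!m)} \<longleftrightarrow> j \<in> B" if "m \<in> {k, l}" for j m
    using that same unfolding B_def i_def by auto
  have to_root: "(x, root x) \<in> diagram_path p w (smoothing {k, l})" if xV: "x \<in> diagram_vertices p w" for x
  proof -
    obtain a j where x: "x = (a, j)" "a \<le> length w" "j \<in> {1..p}"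
      using xV unfolding diagram_vertices_def by auto
    consider "j \<notin> B" | "j \<in> B" "inside a" | "j \<in> B" "\<not> inside a" by blast
    then show ?thesis
    proof cases
      case 1
      have "((a, j), (0, j)) \<in> diagram_path p w (smoothing {k, l})"
        by (rule path_to_level0_smoothing[OF x(2,3)]) (use 1 touch in blast)
      then show ?thesis using 1 unfolding x root_def by simp
    next
      case 2
      have "((a, j), (l, j)) \<in> diagram_path p w (smoothing {k, l})"
        using 2 x kl unfolding inside_def by (intro vertical_path) auto
      moreover have "((l, w!l), (l, Suc (w!l))) \<in> diagram_edges p w (smoothing {k, l})"
        using kl by (intro horizontal_edge) auto
      then have "((l, i), (l, Suc i)) \<in> diagram_path p w (smoothing {k, l})"
        using same unfolding i_def by (simp add: diagram_path_edge)
      then have "((l, j), (l, i)) \<in> diagram_path p w (smoothing {k, l})"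
        using 2(1) unfolding B_def by (rule diagram_path_to_left)
      ultimately show ?thesis using 2 unfolding x root_def by (simp add: diagram_path_trans)
    next
      case 3
      have "((a, j), (0, j)) \<in> diagram_path p w (smoothing {k, l})"
        using 3 x kl unfolding inside_def by (intro path_to_level0) auto
      moreover have "((0, i), (0, Suc i)) \<in> diagram_path p w (smoothing {k, l})"
        unfolding i_def using kl by (intro level0_link_first) auto
      then have "((0, j), (0, i)) \<in> diagram_path p w (smoothing {k, l})"
        using 3(1) unfolding B_def by (rule diagram_path_to_left)
      ultimately show ?thesis using 3 unfolding x root_def by (simp add: diagram_path_trans)
    qed
  qed
  have same_root: "y \<in> diagram_vertices p w \<and> root y = root x"
    if "x \<in> diagram_vertices p w" "y \<in> cl x" for x y
    using that B kl unfolding cl_def root_def P_def Q_def inside_def diagram_vertices_def columns_def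
    by (auto split: if_splits)
  have "circles p w {k, l} = cl ` diagram_vertices p w"
  proof (rule circles_eq_image)
    fix x y assume "(x, y) \<in> diagram_edges p w (smoothing {k, l})"
    then show "cl x = cl y"
    proof (cases rule: diagram_edge_smoothingE)
      case (vertical m j)
      then have "j \<in> B \<Longrightarrow> m \<noteq> k \<and> m \<noteq> l" using touch by blast
      then show ?thesis using vertical unfolding cl_def inside_def by auto
    next
      case (horizontal m a)
      then show ?thesis using touch[of m] unfolding cl_def by auto
    qed (use kl in \<open>auto simp: cl_def inside_def\<close>)
  next
    fix x assume "x \<in> diagram_vertices p w"
    then show "x \<in> cl x" "cl x \<subseteq> diagram_vertices p w"
      using B kl unfolding cl_def P_def Q_def inside_def diagram_vertices_def columns_def by auto
  next
    fix x y assume "x \<in> diagram_vertices p w" "y \<in> cl x"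
    then have "(x, root x) \<in> diagram_path p w (smoothing {k, l})"
      "(root x, y) \<in> diagram_path p w (smoothing {k, l})"
      using to_root same_root diagram_path_sym by metis+
    then show "(x, y) \<in> diagram_path p w (smoothing {k, l})" by (rule diagram_path_trans)
  qed
  also have "\<dots> = (\<lambda>x. if x = i then Q else if x = Suc i then P else columns w {x}) ` {1..p}"
  proof
    show "cl ` diagram_vertices p w \<subseteq> (\<lambda>x. if x = i then Q else if x = Suc i then P else columns w {x}) ` {1..p}"
      using B unfolding cl_def diagram_vertices_def B_def by auto
    have "Q = cl (0, i)" "P = cl (l, Suc i)" "(0, i) \<in> diagram_vertices p w" "(l, Suc i) \<in> diagram_vertices p w"
      using B kl unfolding cl_def inside_def diagram_vertices_def B_def by auto
    moreover have "columns w {j} = cl (0, j)" "(0, j) \<in> diagram_vertices p w" if "j \<in> {1..p} - B" for j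
      using that unfolding cl_def diagram_vertices_def by auto
    ultimately show "(\<lambda>x. if x = i then Q else if x = Suc i then P else columns w {x}) ` {1..p} \<subseteq> cl ` diagram_vertices p w"
      unfolding B_def by auto
  qed
  finally show ?thesis unfolding P_def Q_def B_def i_def .
qed

end

lemma finite_components: "finite (components p w mode)"
proof -
  have "finite (diagram_vertices p w)" unfolding diagram_vertices_def by auto
  then show ?thesis unfolding components_def quotient_def by (intro finite_UN_I) auto
qed

lemma finite_circles: "finite (circles p w E)"
  unfolding circles_def by (rule finite_components)

lemma finite_kh_gens: "finite (kh_gens p w)"
proof -
  have "kh_gens p w \<subseteq> (\<Union>E\<in>Pow {..<length w}. Pair E ` Pow (circles p w E))"
    unfolding kh_gens_def by auto
  moreover have "finite (\<Union>E\<in>Pow {..<length w}. Pair E ` Pow (circles p w E))"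
    using finite_circles by (intro finite_UN_I) auto
  ultimately show ?thesis by (rule finite_subset)
qed

lemma edge_coeff_nonzero_insert:
  assumes "edge_coeff p w g g' \<noteq> 0"
  shows "\<exists>k<length w. k \<notin> fst g \<and> fst g' = insert k (fst g)"
  using assms unfolding edge_coeff_def Let_def by (auto split: if_splits)

lemma edge_coeff_nonzero_kh_gens:
  assumes "g \<in> kh_gens p w" "edge_coeff p w g g' \<noteq> 0"
  shows "g' \<in> kh_gens p w"
proof -
  obtain E S where g: "g = (E,S)" by (cases g)
  obtain E' S' where g': "g' = (E',S')" by (cases g')
  define A where "A = circles p w E - circles p w E'"
  define A' where "A' = circles p w E' - circles p w E"
  have c: "\<exists>k<length w. k \<notin> E \<and> E' = insert k E" "S - A = S' - A'"
    using assms(2) unfolding edge_coeff_def Let_def g g' A_def A'_def by (auto split: if_splits)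
  have "E \<subseteq> {..<length w}" "S \<subseteq> circles p w E" using assms(1) g unfolding kh_gens_def by auto
  then have "E' \<subseteq> {..<length w}" using c(1) by auto
  moreover have "S' \<subseteq> circles p w E'"
  proof
    fix x assume x: "x \<in> S'"
    show "x \<in> circles p w E'"
    proof (cases "x \<in> A'")
      case True then show ?thesis unfolding A'_def by auto
    next
      case False
      then have "x \<in> S - A" using c(2) x by auto
      then show ?thesis using \<open>S \<subseteq> circles p w E\<close> unfolding A_def by auto
    qed
  qed
  ultimately show ?thesis unfolding g' kh_gens_def by auto
qed

lemma edge_coeff_insert:
  assumes "m < length w" "m \<notin> E"
    and "circles p w E - circles p w (insert m E) = A" "circles p w (insert m E) - circles p w E = A'"
  shows "edge_coeff p w (E, S) (insert m E, S') =
    (if S - A = S' - A' \<and>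
        ((card A = 2 \<and> card A' = 1 \<and> ((S \<inter> A = {} \<and> S' \<inter> A' = {}) \<or> (card (S \<inter> A) = 1 \<and> S' \<inter> A' = A'))) \<or>
         (card A = 1 \<and> card A' = 2 \<and> ((S \<inter> A = {} \<and> card (S' \<inter> A') = 1) \<or> (S \<inter> A = A \<and> S' \<inter> A' = A'))))
     then (-1) ^ card {j \<in> E. j < m} else 0)"
proof -
  have "insert m E - E = {m}" using assms(2) by auto
  moreover have "\<exists>k. k < length w \<and> k \<notin> E \<and> insert m E = insert k E" using assms(1,2) by blast
  ultimately show ?thesis unfolding edge_coeff_def Let_def fst_conv snd_conv assms(3,4) by simp blast
qed

lemma card_Int_doubleton:
  assumes "C1 \<noteq> C2"
  shows "card (S \<inter> {C1, C2}) = (if C1 \<in> S then 1 else 0) + (if C2 \<in> S then 1 else 0)"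
proof -
  have "S \<inter> {C1, C2} = (if C1 \<in> S then {C1} else {}) \<union> (if C2 \<in> S then {C2} else {})" by auto
  then show ?thesis using assms by (auto simp: card_insert_if)
qed

lemma doubleton_labels_iff:
  assumes "C1 \<noteq> C2" "C1 \<notin> R0" "C2 \<notin> R0" "S \<subseteq> insert C1 (insert C2 R0)" "R \<subseteq> R0"
  shows "(S - {C1,C2} = R \<and> card (S \<inter> {C1,C2}) = 1) \<longleftrightarrow> (S = insert C1 R \<or> S = insert C2 R)"
proof (cases "C1 \<in> S"; cases "C2 \<in> S")
  assume a: "C1 \<in> S" "C2 \<in> S"
  then have "S \<inter> {C1,C2} = {C1,C2}" by auto
  then have "card (S \<inter> {C1,C2}) = 2" using assms(1) by simp
  moreover have "S \<noteq> insert C1 R" "S \<noteq> insert C2 R" using a assms by blast+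
  ultimately show ?thesis by simp
next
  assume a: "C1 \<in> S" "C2 \<notin> S"
  then have "S \<inter> {C1,C2} = {C1}" by auto
  moreover have "S \<noteq> insert C2 R" using a by blast
  moreover have "(S - {C1,C2} = R) \<longleftrightarrow> S = insert C1 R" using a assms by blast
  ultimately show ?thesis by simp
next
  assume a: "C1 \<notin> S" "C2 \<in> S"
  then have "S \<inter> {C1,C2} = {C2}" by auto
  moreover have "S \<noteq> insert C1 R" using a by blast
  moreover have "(S - {C1,C2} = R) \<longleftrightarrow> S = insert C2 R" using a assms by blast
  ultimately show ?thesis by simp
next
  assume a: "C1 \<notin> S" "C2 \<notin> S"
  then have "S \<inter> {C1,C2} = {}" by auto
  moreover have "S \<noteq> insert C1 R" "S \<noteq> insert C2 R" using a by blast+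
  ultimately show ?thesis by simp
qed

lemma edge_coeff_merge:
  assumes m: "m < length w" "m \<notin> E"
    and CE: "circles p w E = insert C1 (insert C2 R0)"
    and CE': "circles p w (insert m E) = insert M R0"
    and d: "C1 \<noteq> C2" "C1 \<notin> R0" "C2 \<notin> R0" "M \<notin> R0" "M \<noteq> C1" "M \<noteq> C2"
    and S: "S \<subseteq> insert C1 (insert C2 R0)" and S': "S' \<subseteq> insert M R0"
  shows "edge_coeff p w (E, S) (insert m E, S') =
    (if S \<in> (if M \<in> S' then {insert C1 (S' - {M}), insert C2 (S' - {M})} else {S'})
     then (-1) ^ card {j \<in> E. j < m} else 0)"
proof -
  have A: "circles p w E - circles p w (insert m E) = {C1, C2}"
    and A': "circles p w (insert m E) - circles p w E = {M}" using CE CE' d by auto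
  have "card {C1, C2} = 2" using d by auto
  then have eq: "edge_coeff p w (E, S) (insert m E, S') =
    (if S - {C1, C2} = S' - {M} \<and>
        ((S \<inter> {C1, C2} = {} \<and> S' \<inter> {M} = {}) \<or> (card (S \<inter> {C1, C2}) = 1 \<and> S' \<inter> {M} = {M}))
     then (-1) ^ card {j \<in> E. j < m} else 0)"
    by (simp add: edge_coeff_insert[OF m A A'])
  have iff: "(S - {C1, C2} = S' - {M} \<and>
        ((S \<inter> {C1, C2} = {} \<and> S' \<inter> {M} = {}) \<or> (card (S \<inter> {C1, C2}) = 1 \<and> S' \<inter> {M} = {M})))
     \<longleftrightarrow> S \<in> (if M \<in> S' then {insert C1 (S' - {M}), insert C2 (S' - {M})} else {S'})"
  proof (cases "M \<in> S'")
    case True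
    have R: "S' - {M} \<subseteq> R0" using S' by auto
    have "S' \<inter> {M} = {M}" using True by auto
    then show ?thesis using doubleton_labels_iff[OF d(1-3) S R] True by simp
  next
    case False
    have e: "S' \<inter> {M} = {}" "S' - {M} = S'" using False by auto
    have "(S - {C1, C2} = S' \<and> S \<inter> {C1, C2} = {}) \<longleftrightarrow> S = S'" using S S' False d by blast
    then show ?thesis using False by (simp add: e)
  qed
  show ?thesis using eq iff by (simp only:)
qed

lemma edge_coeff_split:
  assumes m: "m < length w" "m \<notin> E"
    and CE: "circles p w E = insert M R0"
    and CE': "circles p w (insert m E) = insert P1 (insert P2 R0)"
    and d: "P1 \<noteq> P2" "P1 \<notin> R0" "P2 \<notin> R0" "M \<notin> R0" "M \<noteq> P1" "M \<noteq> P2"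
    and S: "S \<subseteq> insert M R0" and S': "S' \<subseteq> insert P1 (insert P2 R0)"
  shows "edge_coeff p w (E, S) (insert m E, S') =
    (if S \<in> (if P1 \<in> S' \<and> P2 \<in> S' then {insert M (S' - {P1, P2})}
              else if P1 \<in> S' \<or> P2 \<in> S' then {S' - {P1, P2}} else {})
     then (-1) ^ card {j \<in> E. j < m} else 0)"
proof -
  have A: "circles p w E - circles p w (insert m E) = {M}"
    and A': "circles p w (insert m E) - circles p w E = {P1, P2}" using CE CE' d by auto
  have "card {P1, P2} = 2" using d by auto
  then have eq: "edge_coeff p w (E, S) (insert m E, S') =
    (if S - {M} = S' - {P1, P2} \<and>
        ((S \<inter> {M} = {} \<and> card (S' \<inter> {P1, P2}) = 1) \<or> (S \<inter> {M} = {M} \<and> S' \<inter> {P1, P2} = {P1, P2}))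
     then (-1) ^ card {j \<in> E. j < m} else 0)"
    by (simp add: edge_coeff_insert[OF m A A'])
  have iff: "(S - {M} = S' - {P1, P2} \<and>
        ((S \<inter> {M} = {} \<and> card (S' \<inter> {P1, P2}) = 1) \<or> (S \<inter> {M} = {M} \<and> S' \<inter> {P1, P2} = {P1, P2})))
     \<longleftrightarrow> S \<in> (if P1 \<in> S' \<and> P2 \<in> S' then {insert M (S' - {P1, P2})}
              else if P1 \<in> S' \<or> P2 \<in> S' then {S' - {P1, P2}} else {})"
  proof -
    have R: "S' - {P1, P2} \<subseteq> R0" using S' by auto
    have m1: "S \<inter> {M} = {} \<longleftrightarrow> M \<notin> S" "S \<inter> {M} = {M} \<longleftrightarrow> M \<in> S" by auto
    have m2: "S' \<inter> {P1, P2} = {P1, P2} \<longleftrightarrow> P1 \<in> S' \<and> P2 \<in> S'" by auto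
    have sc: "S - {M} = S' - {P1, P2} \<and> M \<in> S \<longleftrightarrow> S = insert M (S' - {P1, P2})"
      "S - {M} = S' - {P1, P2} \<and> M \<notin> S \<longleftrightarrow> S = S' - {P1, P2}"
      using d(4) S R by blast+
    show ?thesis
    proof (cases "P1 \<in> S'"; cases "P2 \<in> S'")
      assume "P1 \<in> S'" "P2 \<in> S'"
      then show ?thesis using sc unfolding m1 m2 card_Int_doubleton[OF d(1)] by auto
    next
      assume "P1 \<in> S'" "P2 \<notin> S'"
      then show ?thesis using sc unfolding m1 m2 card_Int_doubleton[OF d(1)] by auto
    next
      assume "P1 \<notin> S'" "P2 \<in> S'"
      then show ?thesis using sc unfolding m1 m2 card_Int_doubleton[OF d(1)] by auto
    next
      assume "P1 \<notin> S'" "P2 \<notin> S'"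
      then show ?thesis unfolding m1 m2 card_Int_doubleton[OF d(1)] by auto
    qed
  qed
  show ?thesis using eq iff by (simp only:)
qed

lemma sum_if_mem_mult:
  assumes "finite X" "Y \<subseteq> X"
  shows "(\<Sum>S\<in>X. (if S \<in> Y then (a::int) else 0) * f S) = a * (\<Sum>S\<in>Y. f S)"
proof -
  have "(\<Sum>S\<in>X. (if S \<in> Y then a else 0) * f S) = (\<Sum>S\<in>X. if S \<in> Y then a * f S else 0)"
    by (rule sum.cong) auto
  also have "\<dots> = (\<Sum>S\<in>X \<inter> Y. a * f S)" using assms(1) by (rule sum.inter_restrict[symmetric])
  also have "X \<inter> Y = Y" using assms(2) by auto
  finally show ?thesis by (simp add: sum_distrib_left)
qed

lemma merge_sum:
  assumes m: "m < length w" "m \<notin> E"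
    and CE: "circles p w E = insert C1 (insert C2 R0)"
    and CE': "circles p w (insert m E) = insert M R0"
    and d: "C1 \<noteq> C2" "C1 \<notin> R0" "C2 \<notin> R0" "M \<notin> R0" "M \<noteq> C1" "M \<noteq> C2"
    and S': "S' \<subseteq> insert M R0"
  shows "(\<Sum>S\<in>Pow (circles p w E). edge_coeff p w (E,S) (insert m E, S') * f S) =
    (-1) ^ card {j \<in> E. j < m} * (if M \<in> S' then f (insert C1 (S' - {M})) + f (insert C2 (S' - {M})) else f S')"
proof -
  define Y where "Y = (if M \<in> S' then {insert C1 (S' - {M}), insert C2 (S' - {M})} else {S'})"
  have "(\<Sum>S\<in>Pow (circles p w E). edge_coeff p w (E,S) (insert m E, S') * f S) =
        (\<Sum>S\<in>Pow (circles p w E). (if S \<in> Y then (-1) ^ card {j \<in> E. j < m} else 0) * f S)"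
    unfolding Y_def by (rule sum.cong[OF refl]) (subst edge_coeff_merge[OF m CE CE' d _ S'], auto simp: CE)
  also have "\<dots> = (-1) ^ card {j \<in> E. j < m} * (\<Sum>S\<in>Y. f S)"
  proof (rule sum_if_mem_mult)
    show "finite (Pow (circles p w E))" using finite_circles by auto
    have "S' - {M} \<subseteq> R0" using S' by auto
    then show "Y \<subseteq> Pow (circles p w E)" unfolding Y_def CE using S' d by auto
  qed
  also have "(\<Sum>S\<in>Y. f S) = (if M \<in> S' then f (insert C1 (S' - {M})) + f (insert C2 (S' - {M})) else f S')"
  proof (cases "M \<in> S'")
    case True
    have "S' - {M} \<subseteq> R0" using S' by auto
    then have "insert C1 (S' - {M}) \<noteq> insert C2 (S' - {M})" using d by auto
    then show ?thesis using True unfolding Y_def by simp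
  next
    case False
    then show ?thesis unfolding Y_def by simp
  qed
  finally show ?thesis .
qed

lemma split_sum:
  assumes m: "m < length w" "m \<notin> E"
    and CE: "circles p w E = insert M R0"
    and CE': "circles p w (insert m E) = insert P1 (insert P2 R0)"
    and d: "P1 \<noteq> P2" "P1 \<notin> R0" "P2 \<notin> R0" "M \<notin> R0" "M \<noteq> P1" "M \<noteq> P2"
    and S': "S' \<subseteq> insert P1 (insert P2 R0)"
  shows "(\<Sum>S\<in>Pow (circles p w E). edge_coeff p w (E,S) (insert m E, S') * f S) =
    (-1) ^ card {j \<in> E. j < m} * (if P1 \<in> S' \<and> P2 \<in> S' then f (insert M (S' - {P1, P2}))
              else if P1 \<in> S' \<or> P2 \<in> S' then f (S' - {P1, P2}) else 0)"
proof -
  define Y where "Y = (if P1 \<in> S' \<and> P2 \<in> S' then {insert M (S' - {P1, P2})}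
              else if P1 \<in> S' \<or> P2 \<in> S' then {S' - {P1, P2}} else {})"
  have "(\<Sum>S\<in>Pow (circles p w E). edge_coeff p w (E,S) (insert m E, S') * f S) =
        (\<Sum>S\<in>Pow (circles p w E). (if S \<in> Y then (-1) ^ card {j \<in> E. j < m} else 0) * f S)"
    unfolding Y_def by (rule sum.cong[OF refl]) (subst edge_coeff_split[OF m CE CE' d _ S'], auto simp: CE)
  also have "\<dots> = (-1) ^ card {j \<in> E. j < m} * (\<Sum>S\<in>Y. f S)"
  proof (rule sum_if_mem_mult)
    show "finite (Pow (circles p w E))" using finite_circles by auto
    have "S' - {P1, P2} \<subseteq> R0" using S' by auto
    then show "Y \<subseteq> Pow (circles p w E)" unfolding Y_def CE using S' d by auto
  qed
  also have "(\<Sum>S\<in>Y. f S) = (if P1 \<in> S' \<and> P2 \<in> S' then f (insert M (S' - {P1, P2}))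
              else if P1 \<in> S' \<or> P2 \<in> S' then f (S' - {P1, P2}) else 0)"
    unfolding Y_def by simp
  finally show ?thesis .
qed

lemma merge_sum_reindex:
  assumes m: "m < length w" "m \<notin> E"
    and CE: "circles p w E = \<phi> ` D" and CE': "circles p w (insert m E) = \<psi> ` (D - {y})"
    and inj: "inj_on \<phi> D" "inj_on \<psi> (D - {y})"
    and xy: "x \<in> D" "y \<in> D" "x \<noteq> y"
    and agree: "\<And>z. z \<in> D - {x, y} \<Longrightarrow> \<psi> z = \<phi> z"
    and new: "\<psi> x \<notin> \<phi> ` D"
    and T: "T \<subseteq> D - {y}"
  shows "(\<Sum>S\<in>Pow (circles p w E). edge_coeff p w (E, S) (insert m E, \<psi> ` T) * f S) =
    (-1) ^ card {j \<in> E. j < m} * merge_dual x y (\<lambda>T. f (\<phi> ` T)) T"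
proof -
  define R0 where "R0 = \<phi> ` (D - {x, y})"
  have R0_psi: "\<psi> ` (D - {x, y}) = R0" unfolding R0_def using agree by (rule image_cong[OF refl])
  have CE0: "circles p w E = insert (\<phi> x) (insert (\<phi> y) R0)"
    unfolding CE R0_def using xy by blast
  have "D - {y} = insert x (D - {x, y})" using xy by blast
  then have psi_D: "\<psi> ` (D - {y}) = insert (\<psi> x) R0" by (simp only: image_insert R0_psi)
  have d: "\<phi> x \<noteq> \<phi> y" "\<phi> x \<notin> R0" "\<phi> y \<notin> R0" "\<psi> x \<notin> R0" "\<psi> x \<noteq> \<phi> x" "\<psi> x \<noteq> \<phi> y"
  proof -
    show "\<phi> x \<noteq> \<phi> y" using inj(1) xy by (auto dest: inj_onD)
    show "\<phi> x \<notin> R0" "\<phi> y \<notin> R0"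
      unfolding R0_def using xy by (simp_all add: inj_on_image_mem_iff[OF inj(1)])
    show "\<psi> x \<notin> R0" "\<psi> x \<noteq> \<phi> x" "\<psi> x \<noteq> \<phi> y" using new xy unfolding R0_def by blast+
  qed
  have S': "\<psi> ` T \<subseteq> insert (\<psi> x) R0" using image_mono[OF T, of \<psi>] unfolding psi_D .
  have Tx: "T - {x} \<subseteq> D - {y}" "{x} \<subseteq> D - {y}" using T xy by auto
  have mem: "\<psi> x \<in> \<psi> ` T \<longleftrightarrow> x \<in> T" using inj_on_image_mem_iff[OF inj(2) _ T] xy by simp
  have rest: "\<psi> ` T - {\<psi> x} = \<phi> ` (T - {x})"
  proof -
    have "\<psi> ` T - {\<psi> x} = \<psi> ` (T - {x})" using inj_on_image_set_diff[OF inj(2) Tx] by simp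
    also have "\<dots> = \<phi> ` (T - {x})" using agree T by (intro image_cong) auto
    finally show ?thesis .
  qed
  have sum: "(\<Sum>S\<in>Pow (circles p w E). edge_coeff p w (E, S) (insert m E, \<psi> ` T) * f S) =
    (-1) ^ card {j \<in> E. j < m} * (if x \<in> T then f (insert (\<phi> x) (\<phi> ` (T - {x})))
      + f (insert (\<phi> y) (\<phi> ` (T - {x}))) else f (\<psi> ` T))"
    using merge_sum[OF m CE0 CE' [unfolded psi_D] d S'] unfolding mem rest .
  show ?thesis
  proof (cases "x \<in> T")
    case True
    then have "insert (\<phi> x) (\<phi> ` (T - {x})) = \<phi> ` T" by blast
    then show ?thesis unfolding sum merge_dual_def using True by simp
  next
    case False
    then have "\<psi> ` T = \<phi> ` T" using agree T by (intro image_cong) auto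
    then show ?thesis unfolding sum merge_dual_def using False by simp
  qed
qed

text \<open>The transpose of the comultiplication \<open>\<Delta>(1) = 1 \<otimes> X + X \<otimes> 1\<close>, \<open>\<Delta>(X) = X \<otimes> X\<close>
  splitting circle x into circles x and y, on labellings coded as for \<^const>\<open>merge_dual\<close>.\<close>

definition split_dual :: "nat \<Rightarrow> nat \<Rightarrow> (nat set \<Rightarrow> int) \<Rightarrow> nat set \<Rightarrow> int" where
  "split_dual x y f T = (if x \<in> T \<and> y \<in> T then f (T - {y}) else if x \<in> T \<or> y \<in> T then f (T - {x, y}) else 0)"

lemma split_sum_reindex:
  assumes m: "m < length w" "m \<notin> E"
    and CE: "circles p w E = \<phi> ` D" and CE': "circles p w (insert m E) = \<psi> ` insert y D"
    and inj: "inj_on \<phi> D" "inj_on \<psi> (insert y D)"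
    and xy: "x \<in> D" "y \<notin> D"
    and agree: "\<And>z. z \<in> D - {x} \<Longrightarrow> \<psi> z = \<phi> z"
    and new: "\<phi> x \<notin> \<psi> ` insert y D"
    and T: "T \<subseteq> insert y D"
  shows "(\<Sum>S\<in>Pow (circles p w E). edge_coeff p w (E, S) (insert m E, \<psi> ` T) * f S) =
    (-1) ^ card {j \<in> E. j < m} * split_dual x y (\<lambda>T. f (\<phi> ` T)) T"
proof -
  define R0 where "R0 = \<phi> ` (D - {x})"
  have R0_psi: "\<psi> ` (D - {x}) = R0" unfolding R0_def using agree by (rule image_cong[OF refl])
  have "circles p w E = \<phi> ` insert x (D - {x})" unfolding CE using xy(1) by (simp add: insert_absorb)
  then have CE0: "circles p w E = insert (\<phi> x) R0" unfolding R0_def by (simp only: image_insert)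
  have "insert y D = insert x (insert y (D - {x}))" using xy by blast
  then have psi_D: "\<psi> ` insert y D = insert (\<psi> x) (insert (\<psi> y) R0)"
    by (simp only: image_insert R0_psi)
  have xyD: "x \<in> insert y D" "y \<in> insert y D" "x \<noteq> y" using xy by auto
  have d: "\<psi> x \<noteq> \<psi> y" "\<psi> x \<notin> R0" "\<psi> y \<notin> R0" "\<phi> x \<notin> R0" "\<phi> x \<noteq> \<psi> x" "\<phi> x \<noteq> \<psi> y"
  proof -
    show "\<psi> x \<noteq> \<psi> y" using inj(2) xyD by (auto dest: inj_onD)
    have sub: "D - {x} \<subseteq> insert y D" by blast
    show "\<psi> x \<notin> R0" "\<psi> y \<notin> R0" using xy
      unfolding R0_psi[symmetric] inj_on_image_mem_iff[OF inj(2) xyD(1) sub]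
        inj_on_image_mem_iff[OF inj(2) xyD(2) sub] by simp_all
    show "\<phi> x \<notin> R0" unfolding R0_def inj_on_image_mem_iff[OF inj(1) xy(1) Diff_subset] by simp
    show "\<phi> x \<noteq> \<psi> x" "\<phi> x \<noteq> \<psi> y" using new xy by blast+
  qed
  have S': "\<psi> ` T \<subseteq> insert (\<psi> x) (insert (\<psi> y) R0)" using image_mono[OF T, of \<psi>] unfolding psi_D .
  have Txy: "T - {x, y} \<subseteq> insert y D" "{x, y} \<subseteq> insert y D" using T xy by auto
  have mem: "\<psi> x \<in> \<psi> ` T \<longleftrightarrow> x \<in> T" "\<psi> y \<in> \<psi> ` T \<longleftrightarrow> y \<in> T"
    using inj_on_image_mem_iff[OF inj(2) _ T] xyD by simp_all
  have rest: "\<psi> ` T - {\<psi> x, \<psi> y} = \<phi> ` (T - {x, y})"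
  proof -
    have "\<psi> ` T - {\<psi> x, \<psi> y} = \<psi> ` (T - {x, y})" using inj_on_image_set_diff[OF inj(2) Txy] by simp
    also have "\<dots> = \<phi> ` (T - {x, y})" using agree T by (intro image_cong) auto
    finally show ?thesis .
  qed
  have sum: "(\<Sum>S\<in>Pow (circles p w E). edge_coeff p w (E, S) (insert m E, \<psi> ` T) * f S) =
    (-1) ^ card {j \<in> E. j < m} * (if x \<in> T \<and> y \<in> T then f (insert (\<phi> x) (\<phi> ` (T - {x, y})))
      else if x \<in> T \<or> y \<in> T then f (\<phi> ` (T - {x, y})) else 0)"
    using split_sum[OF m CE0 CE'[unfolded psi_D] d S'] unfolding mem rest .
  have "split_dual x y (\<lambda>T. f (\<phi> ` T)) T = (if x \<in> T \<and> y \<in> T then f (insert (\<phi> x) (\<phi> ` (T - {x, y})))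
      else if x \<in> T \<or> y \<in> T then f (\<phi> ` (T - {x, y})) else 0)"
  proof (cases "x \<in> T \<and> y \<in> T")
    case True
    then have "insert (\<phi> x) (\<phi> ` (T - {x, y})) = \<phi> ` (T - {y})" using xyD(3) by blast
    with True show ?thesis unfolding split_dual_def by (simp only: if_True)
  qed (simp only: split_dual_def if_False)
  then show ?thesis unfolding sum by (simp only:)
qed

lemma kh_d_eq_sum_subset:
  assumes "\<And>g. g \<in> kh_gens p w \<Longrightarrow> c g \<noteq> 0 \<Longrightarrow> edge_coeff p w g g' \<noteq> 0 \<Longrightarrow> g \<in> X"
    and "X \<subseteq> kh_gens p w"
  shows "kh_d p w c g' = (\<Sum>g\<in>X. edge_coeff p w g g' * c g)"
  unfolding kh_d_def
  by (rule sum.mono_neutral_right[OF finite_kh_gens assms(2)]) (use assms(1) in auto)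

lemma kh_d_from_degree0:
  assumes "\<And>g. b g \<noteq> 0 \<Longrightarrow> fst g = {}"
  shows "kh_d p w b g' = (\<Sum>S\<in>Pow (circles p w {}). edge_coeff p w ({},S) g' * b ({},S))"
proof -
  have "kh_d p w b g' = (\<Sum>g\<in>Pair {} ` Pow (circles p w {}). edge_coeff p w g g' * b g)"
  proof (rule kh_d_eq_sum_subset)
    fix g assume "g \<in> kh_gens p w" "b g \<noteq> 0"
    then show "g \<in> Pair {} ` Pow (circles p w {})" using assms unfolding kh_gens_def by force
  qed (auto simp: kh_gens_def)
  also have "\<dots> = (\<Sum>S\<in>Pow (circles p w {}). edge_coeff p w ({},S) g' * b ({},S))"
    by (subst sum.reindex) (auto simp: inj_on_def)
  finally show ?thesis .
qed

lemma kh_d_from_degree1: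
  assumes "\<And>g. c g \<noteq> 0 \<Longrightarrow> card (fst g) = 1" and kl: "k \<noteq> l" "k < length w" "l < length w"
  shows "kh_d p w c ({k,l}, S') = (\<Sum>S\<in>Pow (circles p w {k}). edge_coeff p w ({k},S) ({k,l},S') * c ({k},S))
        + (\<Sum>S\<in>Pow (circles p w {l}). edge_coeff p w ({l},S) ({k,l},S') * c ({l},S))"
proof -
  have "kh_d p w c ({k,l}, S') = (\<Sum>g\<in>Pair {k} ` Pow (circles p w {k}) \<union> Pair {l} ` Pow (circles p w {l}). edge_coeff p w g ({k,l},S') * c g)"
  proof (rule kh_d_eq_sum_subset)
    fix g assume g: "g \<in> kh_gens p w" "c g \<noteq> 0" "edge_coeff p w g ({k,l},S') \<noteq> 0"
    obtain E S where gES: "g = (E,S)" by (cases g)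
    obtain x where Ex: "E = {x}" using assms(1)[OF g(2)] gES by (auto simp: card_Suc_eq)
    obtain y where "{k,l} = insert y E" using edge_coeff_nonzero_insert[OF g(3)] gES by auto
    then have "x = k \<or> x = l" using Ex by auto
    then show "g \<in> Pair {k} ` Pow (circles p w {k}) \<union> Pair {l} ` Pow (circles p w {l})"
      using g(1) gES Ex unfolding kh_gens_def by auto
  next
    show "Pair {k} ` Pow (circles p w {k}) \<union> Pair {l} ` Pow (circles p w {l}) \<subseteq> kh_gens p w"
      using kl unfolding kh_gens_def by auto
  qed
  also have "\<dots> = (\<Sum>g\<in>Pair {k} ` Pow (circles p w {k}). edge_coeff p w g ({k,l},S') * c g)
     + (\<Sum>g\<in>Pair {l} ` Pow (circles p w {l}). edge_coeff p w g ({k,l},S') * c g)"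
    by (rule sum.union_disjoint) (use kl finite_circles in auto)
  also have "\<dots> = (\<Sum>S\<in>Pow (circles p w {k}). edge_coeff p w ({k},S) ({k,l},S') * c ({k},S))
        + (\<Sum>S\<in>Pow (circles p w {l}). edge_coeff p w ({l},S) ({k,l},S') * c ({l},S))"
    by (subst sum.reindex, simp add: inj_on_def)+ simp
  finally show ?thesis .
qed

lemma inj_on_circle_of: "Suc i \<notin> A \<Longrightarrow> inj_on (circle_of w i) A"
  unfolding inj_on_def circle_of_def by (auto split: if_splits)

lemma inj_on_columns_singleton: "inj_on (\<lambda>x. columns w {x}) A"
  unfolding inj_on_def by simp

lemma columns_in_circle_of_image:
  "columns w B \<in> circle_of w i ` A \<longleftrightarrow> (i \<in> A \<and> B = {i, Suc i}) \<or> (\<exists>x\<in>A - {i}. B = {x})"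
  unfolding circle_of_def by (auto split: if_splits)

lemma doubleton_Suc_neq_singleton: "{a, Suc a} \<noteq> {x}"
proof
  assume "{a, Suc a} = {x}"
  then have "a = x" "Suc a = x" by blast+
  then show False by simp
qed

lemma card_filter_singleton_less: "card {j \<in> {k}. j < (l::nat)} = (if k < l then 1 else 0)"
proof -
  have "{j \<in> {k}. j < l} = (if k < l then {k} else {})" by auto
  then show ?thesis by simp
qed

lemma degree1_cycle_square:
  assumes c1: "\<And>g. c g \<noteq> 0 \<Longrightarrow> card (fst g) = 1" and cycle: "kh_d p w c = (\<lambda>_. 0)"
    and kl: "k \<noteq> l" "k < length w" "l < length w"
    and from_k: "(\<Sum>S\<in>Pow (circles p w {k}). edge_coeff p w ({k}, S) ({k, l}, S') * c ({k}, S)) =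
      (-1) ^ card {j \<in> {k}. j < l} * X"
    and from_l: "(\<Sum>S\<in>Pow (circles p w {l}). edge_coeff p w ({l}, S) ({k, l}, S') * c ({l}, S)) =
      (-1) ^ card {j \<in> {l}. j < k} * Y"
  shows "X = Y"
proof -
  have "0 = kh_d p w c ({k, l}, S')" using cycle by simp
  also have "\<dots> = (-1) ^ card {j \<in> {k}. j < l} * X + (-1) ^ card {j \<in> {l}. j < k} * Y"
    using kh_d_from_degree1[OF c1 kl] from_k from_l by simp
  finally show ?thesis using kl(1) unfolding card_filter_singleton_less by (cases "k < l") auto
qed

context
  fixes p :: nat and w :: "nat list"
  assumes letters: "\<forall>i\<in>set w. 1 \<le> i \<and> i < p"
begin

lemma card_circles_empty: "card (circles p w {}) = p"
  unfolding circles_empty[OF letters] by (subst card_image[OF inj_on_columns_singleton]) simp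

lemma card_circles_singleton:
  assumes "k < length w"
  shows "card (circles p w {k}) = p - 1"
proof -
  have "Suc (w!k) \<in> {1..p}" using letter_bounds[OF letters assms] by simp
  then show ?thesis
    unfolding circles_singleton[OF letters assms] by (simp add: card_image inj_on_circle_of)
qed

lemma cycle_same_generator_less:
  assumes c1: "\<And>g. c g \<noteq> 0 \<Longrightarrow> card (fst g) = 1" and cycle: "kh_d p w c = (\<lambda>_. 0)"
    and kl: "k < l" "l < length w" and same: "w!l = w!k"
    and T: "T \<subseteq> {1..p} - {Suc (w!k)}"
  shows "c ({k}, circle_of w (w!k) ` T) = c ({l}, circle_of w (w!k) ` T)"
proof -
  define i where "i = w!k"
  have i: "i \<in> {1..p}" "Suc i \<in> {1..p}" using letter_bounds[OF letters, of k] kl unfolding i_def by auto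
  define D where "D = {1..p} - {Suc i}"
  define P where "P = {Suc k..l} \<times> {i, Suc i}"
  define Q where "Q = ({0..k} \<union> {Suc l..length w}) \<times> {i, Suc i}"
  define \<psi> where "\<psi> x = (if x = i then Q else if x = Suc i then P else columns w {x})" for x
  have D: "insert (Suc i) D = {1..p}" "Suc i \<notin> D" "i \<in> D" using i unfolding D_def by auto
  have CE: "circles p w {k} = circle_of w i ` D" "circles p w {l} = circle_of w i ` D"
    using circles_singleton[OF letters] kl same unfolding i_def D_def by auto
  have CE': "circles p w {k, l} = \<psi> ` insert (Suc i) D"
    unfolding D(1) unfolding \<psi>_def P_def Q_def i_def by (rule circles_pair_same[OF letters kl same])
  have in_columns: "(0, x) \<in> columns w X" "(Suc k, x) \<in> columns w X" if "x \<in> X" for x X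
    using that kl unfolding columns_def by auto
  have not_in: "(0, x) \<notin> P" "(Suc k, x) \<notin> Q" for x using kl unfolding P_def Q_def by auto
  have "(0, i) \<in> Q" unfolding Q_def by simp
  then have distinct: "P \<noteq> Q" "P \<noteq> columns w X" "Q \<noteq> columns w X" if "X \<noteq> {}" for X
    using that in_columns not_in by blast+
  have inj: "inj_on \<psi> (insert (Suc i) D)"
  proof (rule inj_onI)
    fix x y assume "\<psi> x = \<psi> y"
    then show "x = y" using distinct[of "{x}"] distinct[of "{y}"] unfolding \<psi>_def by (auto split: if_splits)
  qed
  have not_singleton: "{i, Suc i} \<noteq> {z}" for z
  proof
    assume "{i, Suc i} = {z}"
    then have "i = z" "Suc i = z" by blast+
    then show False by simp
  qed
  have new: "circle_of w i i \<notin> \<psi> ` insert (Suc i) D"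
  proof
    assume "circle_of w i i \<in> \<psi> ` insert (Suc i) D"
    then obtain z where "columns w {i, Suc i} = \<psi> z" unfolding circle_of_def by auto
    then show False
      using distinct[of "{i, Suc i}"] not_singleton[of z] unfolding \<psi>_def by (simp split: if_splits)
  qed
  have agree: "\<psi> z = circle_of w i z" if "z \<in> D - {i}" for z
    using that unfolding \<psi>_def circle_of_def D_def by auto
  define T' where "T' = (if i \<in> T then insert (Suc i) T else insert i T)"
  have T': "T' \<subseteq> insert (Suc i) D" using T D unfolding T'_def i_def D_def by auto
  have "Suc i \<notin> T" using T unfolding i_def by auto
  have split: "split_dual i (Suc i) g T' = g T" for g
  proof (cases "i \<in> T")
    case True
    have "insert (Suc i) T - {Suc i} = T" using \<open>Suc i \<notin> T\<close> by auto
    then show ?thesis using True unfolding T'_def split_dual_def by simp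
  next
    case False
    have "insert i T - {i, Suc i} = T" using False \<open>Suc i \<notin> T\<close> by auto
    then show ?thesis using False \<open>Suc i \<notin> T\<close> unfolding T'_def split_dual_def by simp
  qed
  have kl': "k \<noteq> l" "k < length w" "l \<notin> {k}" "k \<notin> {l}" using kl by auto
  have CE'': "circles p w (insert l {k}) = \<psi> ` insert (Suc i) D"
    "circles p w (insert k {l}) = \<psi> ` insert (Suc i) D"
    using CE' by (simp_all add: insert_commute)
  from split_sum_reindex[OF kl(2) kl'(3) CE(1) CE''(1) inj_on_circle_of[OF D(2)] inj D(3,2) agree new T',
      where f = "\<lambda>S. c ({k}, S)"]
  have from_k: "(\<Sum>S\<in>Pow (circles p w {k}). edge_coeff p w ({k}, S) ({k, l}, \<psi> ` T') * c ({k}, S)) =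
      (-1) ^ card {j \<in> {k}. j < l} * c ({k}, circle_of w i ` T)"
    unfolding split by (simp add: insert_commute)
  from split_sum_reindex[OF kl'(2,4) CE(2) CE''(2) inj_on_circle_of[OF D(2)] inj D(3,2) agree new T',
      where f = "\<lambda>S. c ({l}, S)"]
  have from_l: "(\<Sum>S\<in>Pow (circles p w {l}). edge_coeff p w ({l}, S) ({k, l}, \<psi> ` T') * c ({l}, S)) =
      (-1) ^ card {j \<in> {l}. j < k} * c ({l}, circle_of w i ` T)"
    unfolding split by simp
  from degree1_cycle_square[OF c1 cycle kl'(1,2) kl(2) from_k from_l] show ?thesis unfolding i_def .
qed

lemma cycle_same_generator:
  assumes c1: "\<And>g. c g \<noteq> 0 \<Longrightarrow> card (fst g) = 1" and cycle: "kh_d p w c = (\<lambda>_. 0)"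
    and kl: "k < length w" "l < length w" and same: "w!l = w!k"
    and T: "T \<subseteq> {1..p} - {Suc (w!k)}"
  shows "c ({k}, circle_of w (w!k) ` T) = c ({l}, circle_of w (w!k) ` T)"
proof (cases k l rule: linorder_cases)
  case less
  from c1 cycle less kl(2) same T show ?thesis by (rule cycle_same_generator_less)
next
  case greater
  have "T \<subseteq> {1..p} - {Suc (w!l)}" using T same by simp
  from c1 cycle greater kl(1) same[symmetric] this
  have "c ({l}, circle_of w (w!l) ` T) = c ({k}, circle_of w (w!l) ` T)"
    by (rule cycle_same_generator_less)
  then show ?thesis unfolding same by simp
qed simp

lemma cycle_far_generators:
  assumes c1: "\<And>g. c g \<noteq> 0 \<Longrightarrow> card (fst g) = 1" and cycle: "kh_d p w c = (\<lambda>_. 0)"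
    and kl: "k < length w" "l < length w" and far: "w!k + 2 \<le> w!l"
    and T: "T \<subseteq> {1..p} - {Suc (w!k), Suc (w!l)}"
  shows "merge_dual (w!l) (Suc (w!l)) (\<lambda>T. c ({k}, circle_of w (w!k) ` T)) T =
    merge_dual (w!k) (Suc (w!k)) (\<lambda>T. c ({l}, circle_of w (w!l) ` T)) T"
proof -
  define i where "i = w!k"
  define i' where "i' = w!l"
  have i: "i \<in> {1..p}" "Suc i \<in> {1..p}" "i' \<in> {1..p}" "Suc i' \<in> {1..p}" "i + 2 \<le> i'"
    using letter_bounds[OF letters kl(1)] letter_bounds[OF letters kl(2)] far unfolding i_def i'_def by auto
  have "k \<noteq> l" using far by auto
  define \<psi> where "\<psi> x = columns w (if x = i then {i, Suc i} else if x = i' then {i', Suc i'} else {x})" for x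
  define D where "D = {1..p} - {Suc i, Suc i'}"
  have D: "{1..p} - {Suc i} - {Suc i'} = D" "{1..p} - {Suc i'} - {Suc i} = D" unfolding D_def by auto
  have CE': "circles p w {k, l} = \<psi> ` D"
    using circles_pair_far[OF letters kl far] unfolding \<psi>_def D_def i_def i'_def .
  have inj: "inj_on \<psi> D"
  proof (rule inj_onI)
    fix x y assume "x \<in> D" "y \<in> D" "\<psi> x = \<psi> y"
    then show "x = y" using i unfolding \<psi>_def D_def by (simp add: doubleton_eq_iff split: if_splits)
  qed
  have T': "T \<subseteq> {1..p} - {Suc i} - {Suc i'}" "T \<subseteq> {1..p} - {Suc i'} - {Suc i}"
    using T unfolding i_def i'_def by auto
  have from_k: "(\<Sum>S\<in>Pow (circles p w {k}). edge_coeff p w ({k}, S) ({k, l}, \<psi> ` T) * c ({k}, S)) =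
      (-1) ^ card {j \<in> {k}. j < l} * merge_dual i' (Suc i') (\<lambda>T. c ({k}, circle_of w i ` T)) T"
  proof -
    have CE: "circles p w {k} = circle_of w i ` ({1..p} - {Suc i})"
      unfolding i_def by (rule circles_singleton[OF letters kl(1)])
    have CE'': "circles p w (insert l {k}) = \<psi> ` ({1..p} - {Suc i} - {Suc i'})"
      unfolding D using CE' by (simp add: insert_commute)
    have agree: "\<psi> z = circle_of w i z" if "z \<in> {1..p} - {Suc i} - {i', Suc i'}" for z
      using that unfolding \<psi>_def circle_of_def by simp
    have new: "\<psi> i' \<notin> circle_of w i ` ({1..p} - {Suc i})"
      using i unfolding \<psi>_def columns_in_circle_of_image by auto
    have "l \<notin> {k}" "i' \<in> {1..p} - {Suc i}" "Suc i' \<in> {1..p} - {Suc i}" "i' \<noteq> Suc i'"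
      using \<open>k \<noteq> l\<close> i by auto
    from merge_sum_reindex[OF kl(2) this(1) CE CE'' inj_on_circle_of inj[folded D(1)] this(2-4) agree new T'(1)]
    show ?thesis by (simp add: insert_commute)
  qed
  have from_l: "(\<Sum>S\<in>Pow (circles p w {l}). edge_coeff p w ({l}, S) ({k, l}, \<psi> ` T) * c ({l}, S)) =
      (-1) ^ card {j \<in> {l}. j < k} * merge_dual i (Suc i) (\<lambda>T. c ({l}, circle_of w i' ` T)) T"
  proof -
    have CE: "circles p w {l} = circle_of w i' ` ({1..p} - {Suc i'})"
      unfolding i'_def by (rule circles_singleton[OF letters kl(2)])
    have CE'': "circles p w (insert k {l}) = \<psi> ` ({1..p} - {Suc i'} - {Suc i})"
      unfolding D using CE' by simp
    have agree: "\<psi> z = circle_of w i' z" if "z \<in> {1..p} - {Suc i'} - {i, Suc i}" for z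
      using that unfolding \<psi>_def circle_of_def by simp
    have new: "\<psi> i \<notin> circle_of w i' ` ({1..p} - {Suc i'})"
      using i unfolding \<psi>_def columns_in_circle_of_image by auto
    have "k \<notin> {l}" "i \<in> {1..p} - {Suc i'}" "Suc i \<in> {1..p} - {Suc i'}" "i \<noteq> Suc i"
      using \<open>k \<noteq> l\<close> i by auto
    from merge_sum_reindex[OF kl(1) this(1) CE CE'' inj_on_circle_of inj[folded D(2)] this(2-4) agree new T'(2)]
    show ?thesis by simp
  qed
  show ?thesis
    using degree1_cycle_square[OF c1 cycle \<open>k \<noteq> l\<close> kl from_k from_l] unfolding i_def i'_def .
qed

lemma cycle_adjacent_generators:
  assumes c1: "\<And>g. c g \<noteq> 0 \<Longrightarrow> card (fst g) = 1" and cycle: "kh_d p w c = (\<lambda>_. 0)"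
    and kl: "k < length w" "l < length w" and adj: "w!l = Suc (w!k)"
    and T: "T \<subseteq> {1..p} - {Suc (w!k), Suc (Suc (w!k))}"
  shows "merge_dual (w!k) (Suc (Suc (w!k))) (\<lambda>T. c ({k}, circle_of w (w!k) ` T)) T =
    merge_dual (w!k) (Suc (w!k)) (\<lambda>T. c ({l}, circle_of w (Suc (w!k)) ` T)) T"
proof -
  define i where "i = w!k"
  have i: "i \<in> {1..p}" "Suc i \<in> {1..p}" "Suc (Suc i) \<in> {1..p}"
    using letter_bounds[OF letters kl(1)] letter_bounds[OF letters kl(2)] adj unfolding i_def by auto
  have "k \<noteq> l" using adj by auto
  define U where "U = {i, Suc i, Suc (Suc i)}"
  have U: "U \<noteq> {i, Suc i}" "U \<noteq> {Suc i, Suc (Suc i)}" "U \<noteq> {x}" for x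
  proof -
    have "i \<in> U" "Suc i \<in> U" "Suc (Suc i) \<in> U" unfolding U_def by simp_all
    moreover have "Suc (Suc i) \<notin> {i, Suc i}" "i \<notin> {Suc i, Suc (Suc i)}" by simp_all
    ultimately show "U \<noteq> {i, Suc i}" "U \<noteq> {Suc i, Suc (Suc i)}" "U \<noteq> {x}" by auto
  qed
  define \<psi> where "\<psi> x = columns w (if x = i then U else {x})" for x
  define D where "D = {1..p} - {Suc i, Suc (Suc i)}"
  have D: "{1..p} - {Suc i} - {Suc (Suc i)} = D" "{1..p} - {Suc (Suc i)} - {Suc i} = D"
    unfolding D_def by auto
  have CE': "circles p w {k, l} = \<psi> ` D"
    using circles_pair_adjacent[OF letters kl adj] unfolding \<psi>_def D_def U_def i_def .
  have inj: "inj_on \<psi> D"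
  proof (rule inj_onI)
    fix x y assume "x \<in> D" "y \<in> D" "\<psi> x = \<psi> y"
    then show "x = y" using U unfolding \<psi>_def D_def by (auto split: if_splits)
  qed
  have T': "T \<subseteq> {1..p} - {Suc i} - {Suc (Suc i)}" "T \<subseteq> {1..p} - {Suc (Suc i)} - {Suc i}"
    using T unfolding i_def by auto
  have from_k: "(\<Sum>S\<in>Pow (circles p w {k}). edge_coeff p w ({k}, S) ({k, l}, \<psi> ` T) * c ({k}, S)) =
      (-1) ^ card {j \<in> {k}. j < l} * merge_dual i (Suc (Suc i)) (\<lambda>T. c ({k}, circle_of w i ` T)) T"
  proof -
    have CE: "circles p w {k} = circle_of w i ` ({1..p} - {Suc i})"
      unfolding i_def by (rule circles_singleton[OF letters kl(1)])
    have CE'': "circles p w (insert l {k}) = \<psi> ` ({1..p} - {Suc i} - {Suc (Suc i)})"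
      unfolding D using CE' by (simp add: insert_commute)
    have agree: "\<psi> z = circle_of w i z" if "z \<in> {1..p} - {Suc i} - {i, Suc (Suc i)}" for z
      using that unfolding \<psi>_def circle_of_def by simp
    have new: "\<psi> i \<notin> circle_of w i ` ({1..p} - {Suc i})"
      using U unfolding \<psi>_def columns_in_circle_of_image by auto
    have "l \<notin> {k}" "i \<in> {1..p} - {Suc i}" "Suc (Suc i) \<in> {1..p} - {Suc i}" "i \<noteq> Suc (Suc i)"
      using \<open>k \<noteq> l\<close> i by auto
    from merge_sum_reindex[OF kl(2) this(1) CE CE'' inj_on_circle_of inj[folded D(1)] this(2-4) agree new T'(1)]
    show ?thesis by (simp add: insert_commute)
  qed
  have from_l: "(\<Sum>S\<in>Pow (circles p w {l}). edge_coeff p w ({l}, S) ({k, l}, \<psi> ` T) * c ({l}, S)) =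
      (-1) ^ card {j \<in> {l}. j < k} * merge_dual i (Suc i) (\<lambda>T. c ({l}, circle_of w (Suc i) ` T)) T"
  proof -
    have CE: "circles p w {l} = circle_of w (Suc i) ` ({1..p} - {Suc (Suc i)})"
      using circles_singleton[OF letters kl(2)] adj unfolding i_def by simp
    have CE'': "circles p w (insert k {l}) = \<psi> ` ({1..p} - {Suc (Suc i)} - {Suc i})"
      unfolding D using CE' by simp
    have agree: "\<psi> z = circle_of w (Suc i) z" if "z \<in> {1..p} - {Suc (Suc i)} - {i, Suc i}" for z
      using that unfolding \<psi>_def circle_of_def by simp
    have new: "\<psi> i \<notin> circle_of w (Suc i) ` ({1..p} - {Suc (Suc i)})"
      using U unfolding \<psi>_def columns_in_circle_of_image by auto
    have "k \<notin> {l}" "i \<in> {1..p} - {Suc (Suc i)}" "Suc i \<in> {1..p} - {Suc (Suc i)}" "i \<noteq> Suc i"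
      using \<open>k \<noteq> l\<close> i by auto
    from merge_sum_reindex[OF kl(1) this(1) CE CE'' inj_on_circle_of inj[folded D(2)] this(2-4) agree new T'(2)]
    show ?thesis by simp
  qed
  show ?thesis
    using degree1_cycle_square[OF c1 cycle \<open>k \<noteq> l\<close> kl from_k from_l] unfolding i_def .
qed

end

definition cycle_coeff :: "nat list \<Rightarrow> (kh_gen \<Rightarrow> int) \<Rightarrow> nat \<Rightarrow> nat set \<Rightarrow> int" where
  "cycle_coeff w c i T = c ({SOME k. k < length w \<and> w!k = i}, circle_of w i ` T)"

definition degree0_chain :: "nat \<Rightarrow> nat list \<Rightarrow> (nat set \<Rightarrow> int) \<Rightarrow> kh_gen \<Rightarrow> int" where
  "degree0_chain p w f g =
    (if fst g = {} \<and> snd g \<subseteq> circles p w {} then f {x \<in> {1..p}. columns w {x} \<in> snd g} else 0)"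

context
  fixes p :: nat and w :: "nat list"
  assumes letters: "\<forall>i\<in>set w. 1 \<le> i \<and> i < p"
begin

lemma cycle_coeff_eq:
  assumes c1: "\<And>g. c g \<noteq> 0 \<Longrightarrow> card (fst g) = 1" and cycle: "kh_d p w c = (\<lambda>_. 0)"
    and k: "k < length w" and T: "T \<subseteq> {1..p} - {Suc (w!k)}"
  shows "c ({k}, circle_of w (w!k) ` T) = cycle_coeff w c (w!k) T"
proof -
  define k' where "k' = (SOME k'. k' < length w \<and> w!k' = w!k)"
  have "k' < length w \<and> w!k' = w!k" unfolding k'_def by (rule someI_ex) (use k in blast)
  then show ?thesis
    unfolding cycle_coeff_def k'_def[symmetric] using cycle_same_generator[OF letters c1 cycle k _ _ T] by simp
qed

lemma cycle_coeff_far: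
  assumes c1: "\<And>g. c g \<noteq> 0 \<Longrightarrow> card (fst g) = 1" and cycle: "kh_d p w c = (\<lambda>_. 0)"
    and ij: "i \<in> set w" "j \<in> set w" "i + 2 \<le> j" and T: "T \<subseteq> {1..p} - {Suc i, Suc j}"
  shows "merge_dual j (Suc j) (cycle_coeff w c i) T = merge_dual i (Suc i) (cycle_coeff w c j) T"
proof -
  obtain k l where kl: "k < length w" "l < length w" "w!k = i" "w!l = j"
    using ij(1,2) by (metis in_set_conv_nth)
  have j: "Suc j \<le> p" and i: "Suc i \<le> p" using ij(1,2) letters by auto
  have k: "cycle_coeff w c i S = c ({k}, circle_of w i ` S)" if "S \<subseteq> {1..p} - {Suc i}" for S
    using cycle_coeff_eq[OF c1 cycle kl(1), of S] that kl(3) by simp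
  have l: "cycle_coeff w c j S = c ({l}, circle_of w j ` S)" if "S \<subseteq> {1..p} - {Suc j}" for S
    using cycle_coeff_eq[OF c1 cycle kl(2), of S] that kl(4) by simp
  have sub: "T \<subseteq> {1..p} - {Suc i}" "insert (Suc j) (T - {j}) \<subseteq> {1..p} - {Suc i}"
    "T \<subseteq> {1..p} - {Suc j}" "insert (Suc i) (T - {i}) \<subseteq> {1..p} - {Suc j}"
    using T i j ij(3) by auto
  have "merge_dual j (Suc j) (cycle_coeff w c i) T = merge_dual j (Suc j) (\<lambda>T. c ({k}, circle_of w i ` T)) T"
    by (rule merge_dual_cong) (rule k[OF sub(1)], rule k[OF sub(2)])
  also have "\<dots> = merge_dual i (Suc i) (\<lambda>T. c ({l}, circle_of w j ` T)) T"
    using cycle_far_generators[OF letters c1 cycle kl(1,2)] T ij(3) kl by simp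
  also have "\<dots> = merge_dual i (Suc i) (cycle_coeff w c j) T"
    by (rule merge_dual_cong) (rule l[OF sub(3), symmetric], rule l[OF sub(4), symmetric])
  finally show ?thesis .
qed

lemma cycle_coeff_adjacent:
  assumes c1: "\<And>g. c g \<noteq> 0 \<Longrightarrow> card (fst g) = 1" and cycle: "kh_d p w c = (\<lambda>_. 0)"
    and i: "i \<in> set w" "Suc i \<in> set w" and T: "T \<subseteq> {1..p} - {Suc i, i + 2}"
  shows "merge_dual i (i + 2) (cycle_coeff w c i) T = merge_dual i (Suc i) (cycle_coeff w c (Suc i)) T"
proof -
  obtain k l where kl: "k < length w" "l < length w" "w!k = i" "w!l = Suc i"
    using i by (metis in_set_conv_nth)
  have p: "i + 2 \<le> p" using i(2) letters by auto
  have k: "cycle_coeff w c i S = c ({k}, circle_of w i ` S)" if "S \<subseteq> {1..p} - {Suc i}" for S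
    using cycle_coeff_eq[OF c1 cycle kl(1), of S] that kl(3) by simp
  have l: "cycle_coeff w c (Suc i) S = c ({l}, circle_of w (Suc i) ` S)" if "S \<subseteq> {1..p} - {i + 2}" for S
    using cycle_coeff_eq[OF c1 cycle kl(2), of S] that kl(4) by simp
  have sub: "T \<subseteq> {1..p} - {Suc i}" "insert (i + 2) (T - {i}) \<subseteq> {1..p} - {Suc i}"
    "T \<subseteq> {1..p} - {i + 2}" "insert (Suc i) (T - {i}) \<subseteq> {1..p} - {i + 2}"
    using T p by auto
  have "merge_dual i (i + 2) (cycle_coeff w c i) T = merge_dual i (i + 2) (\<lambda>T. c ({k}, circle_of w i ` T)) T"
    by (rule merge_dual_cong) (rule k[OF sub(1)], rule k[OF sub(2)])
  also have "\<dots> = merge_dual i (Suc i) (\<lambda>T. c ({l}, circle_of w (Suc i) ` T)) T"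
    using cycle_adjacent_generators[OF letters c1 cycle kl(1,2)] T kl by (simp add: numeral_2_eq_2)
  also have "\<dots> = merge_dual i (Suc i) (cycle_coeff w c (Suc i)) T"
    by (rule merge_dual_cong) (rule l[OF sub(3), symmetric], rule l[OF sub(4), symmetric])
  finally show ?thesis .
qed

lemma degree1_cycle_primitive:
  assumes c1: "\<And>g. c g \<noteq> 0 \<Longrightarrow> card (fst g) = 1" and cycle: "kh_d p w c = (\<lambda>_. 0)"
  obtains f where "\<And>k T. k < length w \<Longrightarrow> T \<subseteq> {1..p} - {Suc (w!k)} \<Longrightarrow>
    merge_dual (w!k) (Suc (w!k)) f T = c ({k}, circle_of w (w!k) ` T)"
proof -
  have "\<exists>f. \<forall>i\<in>set w. \<forall>T. T \<subseteq> {1..p} - {Suc i} \<longrightarrow> merge_dual i (Suc i) f T = cycle_coeff w c i T"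
  proof (rule merge_dual_primitive_exists)
    show "set w \<subseteq> {1..<p}" using letters by auto
  qed (use cycle_coeff_far[OF c1 cycle] cycle_coeff_adjacent[OF c1 cycle] in auto)
  then obtain f where f: "\<And>i T. i \<in> set w \<Longrightarrow> T \<subseteq> {1..p} - {Suc i} \<Longrightarrow>
      merge_dual i (Suc i) f T = cycle_coeff w c i T"
    by auto
  show thesis
  proof (rule that)
    fix k T assume k: "k < length w" and T: "T \<subseteq> {1..p} - {Suc (w!k)}"
    then show "merge_dual (w!k) (Suc (w!k)) f T = c ({k}, circle_of w (w!k) ` T)"
      using f[OF nth_mem[OF k] T] cycle_coeff_eq[OF c1 cycle k T] by simp
  qed
qed

lemma degree0_chain_columns:
  assumes "X \<subseteq> {1..p}"
  shows "degree0_chain p w f ({}, (\<lambda>x. columns w {x}) ` X) = f X"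
proof -
  have "(\<lambda>x. columns w {x}) ` X \<subseteq> circles p w {}"
    using assms unfolding circles_empty[OF letters] by auto
  moreover have "{x \<in> {1..p}. columns w {x} \<in> (\<lambda>x. columns w {x}) ` X} = X" using assms by auto
  ultimately show ?thesis unfolding degree0_chain_def by simp
qed

lemma kh_d_degree0_chain:
  assumes k: "k < length w" and T: "T \<subseteq> {1..p} - {Suc (w!k)}"
  shows "kh_d p w (degree0_chain p w f) ({k}, circle_of w (w!k) ` T) = merge_dual (w!k) (Suc (w!k)) f T"
proof -
  define i where "i = w!k"
  have i: "i \<in> {1..p}" "Suc i \<in> {1..p}" "i \<noteq> Suc i"
    using letter_bounds[OF letters k] unfolding i_def by auto
  have CE': "circles p w (insert k {}) = circle_of w i ` ({1..p} - {Suc i})"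
    unfolding i_def using circles_singleton[OF letters k] by simp
  have agree: "circle_of w i z = columns w {z}" if "z \<in> {1..p} - {i, Suc i}" for z
    using that unfolding circle_of_def by simp
  have new: "circle_of w i i \<notin> (\<lambda>x. columns w {x}) ` {1..p}"
    using doubleton_Suc_neq_singleton unfolding circle_of_def by auto
  have "kh_d p w (degree0_chain p w f) ({k}, circle_of w i ` T) =
      (\<Sum>S\<in>Pow (circles p w {}). edge_coeff p w ({}, S) ({k}, circle_of w i ` T) * degree0_chain p w f ({}, S))"
    by (rule kh_d_from_degree0) (simp add: degree0_chain_def split: if_splits)
  also have "\<dots> = merge_dual i (Suc i) (\<lambda>T. degree0_chain p w f ({}, (\<lambda>x. columns w {x}) ` T)) T"
    using merge_sum_reindex[OF k _ circles_empty[OF letters] CE' inj_on_columns_singleton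
        inj_on_circle_of i agree new] T unfolding i_def by simp
  also have "\<dots> = merge_dual i (Suc i) f T"
  proof (rule merge_dual_cong)
    show "degree0_chain p w f ({}, (\<lambda>x. columns w {x}) ` T) = f T"
      using T by (intro degree0_chain_columns) auto
    show "degree0_chain p w f ({}, (\<lambda>x. columns w {x}) ` insert (Suc i) (T - {i})) = f (insert (Suc i) (T - {i}))"
      using T i by (intro degree0_chain_columns) auto
  qed
  finally show ?thesis unfolding i_def .
qed

lemma qdeg_degree1:
  assumes k: "k < length w" and T: "T \<subseteq> {1..p} - {Suc (w!k)}"
  shows "qdeg p w ({k}, circle_of w (w!k) ` T) = int p + int (length w) - 2 * int (card T)"
proof -
  have "card (circle_of w (w!k) ` T) = card T"
    using T by (intro card_image inj_on_circle_of) auto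
  moreover have "1 \<le> p" using letter_bounds[OF letters k] by simp
  ultimately show ?thesis unfolding qdeg_def by (simp add: card_circles_singleton[OF letters k] of_nat_diff)
qed

lemma degree0_chain_kh_chain:
  assumes "\<And>X. X \<subseteq> {1..p} \<Longrightarrow> f X \<noteq> 0 \<Longrightarrow> int p + int (length w) - 2 * int (card X) = j"
  shows "kh_chain p w 0 j (degree0_chain p w f)"
  unfolding kh_chain_def
proof (intro allI impI)
  fix g assume nz: "degree0_chain p w f g \<noteq> 0"
  obtain E S where g: "g = (E, S)" by fastforce
  have E: "E = {}" and S: "S \<subseteq> circles p w {}" using nz unfolding g degree0_chain_def by (auto split: if_splits)
  define X where "X = {x \<in> {1..p}. columns w {x} \<in> S}"
  have SX: "S = (\<lambda>x. columns w {x}) ` X" using S unfolding X_def circles_empty[OF letters] by auto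
  have "f X \<noteq> 0" using nz unfolding g E degree0_chain_def X_def using S by simp
  moreover have "X \<subseteq> {1..p}" unfolding X_def by auto
  ultimately have "int p + int (length w) - 2 * int (card X) = j" using assms by blast
  moreover have "card S = card X" unfolding SX by (rule card_image[OF inj_on_columns_singleton])
  ultimately have "qdeg p w g = j" unfolding qdeg_def g E by (simp add: card_circles_empty[OF letters])
  moreover have "g \<in> kh_gens p w" unfolding g kh_gens_def using E S by simp
  ultimately show "g \<in> kh_gens p w \<and> hdeg g = 0 \<and> qdeg p w g = j" unfolding hdeg_def g E by simp
qed

end

lemma kh_d_degree0_chain_outside:
  assumes "\<not> (\<exists>k<length w. fst g' = {k} \<and> snd g' \<subseteq> circles p w {k})"
  shows "kh_d p w (degree0_chain p w f) g' = 0"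
  unfolding kh_d_def
proof (rule sum.neutral, rule ballI, rule ccontr)
  fix g assume g: "g \<in> kh_gens p w" and "edge_coeff p w g g' * degree0_chain p w f g \<noteq> 0"
  then have e: "edge_coeff p w g g' \<noteq> 0" and "degree0_chain p w f g \<noteq> 0" by auto
  then have "fst g = {}" unfolding degree0_chain_def by (auto split: if_splits)
  then obtain k where "k < length w" "fst g' = {k}" using edge_coeff_nonzero_insert[OF e] by auto
  moreover have "g' \<in> kh_gens p w" using edge_coeff_nonzero_kh_gens[OF g e] .
  ultimately show False using assms unfolding kh_gens_def by auto
qed

context
  fixes p :: nat and w :: "nat list"
  assumes letters: "\<forall>i\<in>set w. 1 \<le> i \<and> i < p"
begin

lemma kh_d_degree0_chain_eq:
  assumes c: "\<And>g. c g \<noteq> 0 \<Longrightarrow> g \<in> kh_gens p w \<and> card (fst g) = 1"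
    and f: "\<And>k T. k < length w \<Longrightarrow> T \<subseteq> {1..p} - {Suc (w!k)} \<Longrightarrow>
      merge_dual (w!k) (Suc (w!k)) f T = c ({k}, circle_of w (w!k) ` T)"
  shows "kh_d p w (degree0_chain p w f) = c"
proof
  fix g' :: kh_gen
  obtain E' S' where g': "g' = (E', S')" by fastforce
  show "kh_d p w (degree0_chain p w f) g' = c g'"
  proof (cases "\<exists>k<length w. E' = {k} \<and> S' \<subseteq> circles p w {k}")
    case True
    then obtain k where k: "k < length w" "E' = {k}" "S' \<subseteq> circles p w {k}" by blast
    then obtain T where "T \<subseteq> {1..p} - {Suc (w!k)}" "S' = circle_of w (w!k) ` T"
      unfolding circles_singleton[OF letters k(1)] subset_image_iff by blast
    then show ?thesis using kh_d_degree0_chain[OF letters k(1)] f[OF k(1)] unfolding g' k(2) by simp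
  next
    case False
    have "c g' = 0"
    proof (rule ccontr)
      assume "c g' \<noteq> 0"
      then have "g' \<in> kh_gens p w" "card E' = 1" using c unfolding g' by auto
      then show False using False unfolding g' kh_gens_def by (auto simp: card_Suc_eq)
    qed
    moreover have "kh_d p w (degree0_chain p w f) g' = 0"
      using False unfolding g' by (intro kh_d_degree0_chain_outside) simp
    ultimately show ?thesis by simp
  qed
qed

lemma merge_dual_degree_restrict:
  assumes chain: "kh_chain p w 1 j c"
    and f: "\<And>k T. k < length w \<Longrightarrow> T \<subseteq> {1..p} - {Suc (w!k)} \<Longrightarrow>
      merge_dual (w!k) (Suc (w!k)) f T = c ({k}, circle_of w (w!k) ` T)"
    and k: "k < length w" and T: "T \<subseteq> {1..p} - {Suc (w!k)}"
  shows "merge_dual (w!k) (Suc (w!k)) (\<lambda>X. if int p + int (length w) - 2 * int (card X) = j then f X else 0) T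
    = c ({k}, circle_of w (w!k) ` T)"
proof -
  have "finite T" "Suc (w!k) \<notin> T" using T finite_subset by auto
  note restrict = merge_dual_card_restrict[OF this, where P = "\<lambda>n. int p + int (length w) - 2 * int n = j"]
  show ?thesis
  proof (cases "int p + int (length w) - 2 * int (card T) = j")
    case True
    then show ?thesis using restrict f[OF k T] by simp
  next
    case False
    have "c ({k}, circle_of w (w!k) ` T) = 0"
    proof (rule ccontr)
      assume "c ({k}, circle_of w (w!k) ` T) \<noteq> 0"
      then have "qdeg p w ({k}, circle_of w (w!k) ` T) = j" using chain unfolding kh_chain_def by blast
      then show False using False qdeg_degree1[OF letters k T] by simp
    qed
    then show ?thesis using restrict False by simp
  qed
qed

end

theorem theorem2:
  fixes p :: nat and w :: "nat list"
  assumes "1 \<le> p"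
    and "\<forall>i \<in> set w. 1 \<le> i \<and> i < p"
    and "is_knot_closure p w"
  shows "\<forall>j. kh_vanishes p w 1 j"
proof (intro allI)
  fix j
  show "kh_vanishes p w 1 j" unfolding kh_vanishes_def
  proof (intro allI impI, elim conjE)
    fix c assume chain: "kh_chain p w 1 j c" and cycle: "kh_d p w c = (\<lambda>_. 0)"
    have c: "\<And>g. c g \<noteq> 0 \<Longrightarrow> g \<in> kh_gens p w \<and> card (fst g) = 1"
      using chain unfolding kh_chain_def hdeg_def by blast
    obtain f where f: "\<And>k T. k < length w \<Longrightarrow> T \<subseteq> {1..p} - {Suc (w!k)} \<Longrightarrow>
        merge_dual (w!k) (Suc (w!k)) f T = c ({k}, circle_of w (w!k) ` T)"
      using degree1_cycle_primitive[OF assms(2) _ cycle] c by blast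
    define f' where "f' X = (if int p + int (length w) - 2 * int (card X) = j then f X else 0)" for X
    have "kh_d p w (degree0_chain p w f') = c"
      using kh_d_degree0_chain_eq[OF assms(2) c] merge_dual_degree_restrict[OF assms(2) chain f]
      unfolding f'_def by blast
    moreover have "kh_chain p w 0 j (degree0_chain p w f')"
      by (rule degree0_chain_kh_chain[OF assms(2)]) (simp add: f'_def split: if_splits)
    ultimately show "\<exists>b. kh_chain p w (1 - 1) j b \<and> kh_d p w b = c" by auto
  qed
qed

end
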